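(* Let $\alpha\in\mathbb R$ and let $\Sigma$ be a closed (compact, without boundary) $\alpha$-stationary surface in $\mathbb R^3\setminus\{0\}$. Then $\Sigma$ is a sphere centered at the origin (and consequently $\alpha=-2$).
   Context: Let $\Sigma$ be a connected oriented surface immersed in $\mathbb R^3\setminus\{0\}$ with unit normal $\nu$ and mean curvature $H$ (sum of the principal curvatures). For $\alpha\in\mathbb R$, $\Sigma$ is called $\alpha$-stationary if $H(p)=\alpha\,\frac{\langle\nu(p),p\rangle}{|p|^2}$ for all $p\in\Sigma$. *)

theory Defs
  imports "HOL-Analysis.Analysis"
begin

fun Ck_on :: "nat \<Rightarrow> 'a::euclidean_space set \<Rightarrow> ('a \<Rightarrow> 'b::real_normed_vector) \<Rightarrow> bool" where
  "Ck_on 0 U g = continuous_on U g"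
| "Ck_on (Suc k) U g =
     ((\<forall>x\<in>U. g differentiable (at x)) \<and>
      (\<forall>i\<in>Basis. Ck_on k U (\<lambda>x. frechet_derivative g (at x) i)))"

definition smooth_on :: "'a::euclidean_space set \<Rightarrow> ('a \<Rightarrow> 'b::real_normed_vector) \<Rightarrow> bool" where
  "smooth_on U g \<longleftrightarrow> (\<forall>k. Ck_on k U g)"

definition Du :: "(real \<times> real \<Rightarrow> real^3) \<Rightarrow> real \<times> real \<Rightarrow> real^3" where
  "Du X w = frechet_derivative X (at w) (1, 0)"

definition Dv :: "(real \<times> real \<Rightarrow> real^3) \<Rightarrow> real \<times> real \<Rightarrow> real^3" where
  "Dv X w = frechet_derivative X (at w) (0, 1)"

text \<open>Mean curvature (sum of principal curvatures) w.r.t. the unit normal N at the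
parameter w, via the first and second fundamental forms:
H = (e G - 2 f F + g E) / (E G - F^2), with e = <X_uu, N>, f = <X_uv, N>, g = <X_vv, N>.\<close>

definition mean_curv :: "(real \<times> real \<Rightarrow> real^3) \<Rightarrow> real^3 \<Rightarrow> real \<times> real \<Rightarrow> real" where
  "mean_curv X N w =
    (let E = Du X w \<bullet> Du X w; F = Du X w \<bullet> Dv X w; G = Dv X w \<bullet> Dv X w;
         e = Du (Du X) w \<bullet> N; f = Dv (Du X) w \<bullet> N; g = Dv (Dv X) w \<bullet> N
     in (e * G - 2 * f * F + g * E) / (E * G - F\<^sup>2))"

text \<open>Smooth compatibility of charts is automatic since f is a local immersion.\<close>

definition oriented_immersed_surface ::
  "'m topology \<Rightarrow> ((real \<times> real) set \<times> (real \<times> real \<Rightarrow> 'm)) set \<Rightarrow> ('m \<Rightarrow> real^3) \<Rightarrow> ('m \<Rightarrow> real^3) \<Rightarrow> bool"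
where
  "oriented_immersed_surface M A f \<nu> \<longleftrightarrow>
     Hausdorff_space M \<and>
     (\<forall>(U, \<phi>) \<in> A. open U \<and> openin M (\<phi> ` U) \<and>
         homeomorphic_map (top_of_set U) (subtopology M (\<phi> ` U)) \<phi>) \<and>
     (\<forall>p\<in>topspace M. \<exists>(U, \<phi>) \<in> A. p \<in> \<phi> ` U) \<and>
     (\<forall>(U, \<phi>) \<in> A. smooth_on U (f \<circ> \<phi>) \<and>
         (\<forall>w\<in>U. inj (frechet_derivative (f \<circ> \<phi>) (at w)))) \<and>
     continuous_map M euclidean \<nu> \<and>
     (\<forall>p\<in>topspace M. norm (\<nu> p) = 1) \<and>
     (\<forall>(U, \<phi>) \<in> A. \<forall>w\<in>U. \<nu> (\<phi> w) \<bullet> Du (f \<circ> \<phi>) w = 0 \<and> \<nu> (\<phi> w) \<bullet> Dv (f \<circ> \<phi>) w = 0)"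

definition alpha_stationary ::
  "real \<Rightarrow> 'm topology \<Rightarrow> ((real \<times> real) set \<times> (real \<times> real \<Rightarrow> 'm)) set \<Rightarrow> ('m \<Rightarrow> real^3) \<Rightarrow> ('m \<Rightarrow> real^3) \<Rightarrow> bool"
where
  "alpha_stationary \<alpha> M A f \<nu> \<longleftrightarrow>
     oriented_immersed_surface M A f \<nu> \<and>
     (\<forall>p\<in>topspace M. f p \<noteq> 0) \<and>
     (\<forall>(U, \<phi>) \<in> A. \<forall>w\<in>U.
        mean_curv (f \<circ> \<phi>) (\<nu> (\<phi> w)) w = \<alpha> * (\<nu> (\<phi> w) \<bullet> f (\<phi> w)) / (norm (f (\<phi> w)))\<^sup>2)"

end

theory Submission
  imports Defs "HOL-Analysis.Cross3"
begin

text \<open>For \<open>u = |X|\<^sup>2\<close> on a surface with unit normal \<open>N\<close> and mean curvature \<open>H\<close> one has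
  \<open>\<Delta>u = 2 H \<langle>N, X\<rangle> + 4\<close> and \<open>|\<nabla>u|\<^sup>2 = 4 (u - \<langle>N, X\<rangle>\<^sup>2)\<close>. At a maximum and at a minimum of \<open>u\<close>
  on the closed surface the gradient vanishes, so \<open>\<langle>N, X\<rangle>\<^sup>2 = u\<close> and \<open>\<Delta>u = 2\<alpha> + 4\<close> there; the
  maximum principle at the two points gives \<open>\<alpha> = -2\<close>. Then the two formulas combine to
  \<open>\<Delta>u - |\<nabla>u|\<^sup>2 / u = 0\<close>, i.e. \<open>log u\<close> is harmonic, and Hopf's strong maximum principle in
  charts makes the set where \<open>u\<close> is maximal open. By connectedness \<open>|f|\<close> is constant, and the
  image of the immersion is open and closed in that sphere, hence all of it.\<close>

section \<open>Functions with continuous second partial derivatives in the plane\<close>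

definition C2_partials_on :: "(real \<times> real) set \<Rightarrow> (real \<times> real \<Rightarrow> 'b::real_normed_vector) \<Rightarrow>
   (real \<times> real \<Rightarrow> 'b) \<Rightarrow> (real \<times> real \<Rightarrow> 'b) \<Rightarrow> (real \<times> real \<Rightarrow> 'b) \<Rightarrow>
   (real \<times> real \<Rightarrow> 'b) \<Rightarrow> (real \<times> real \<Rightarrow> 'b) \<Rightarrow> (real \<times> real \<Rightarrow> 'b) \<Rightarrow> bool" where
  "C2_partials_on U g g1 g2 g11 g12 g21 g22 \<longleftrightarrow>
    (\<forall>w\<in>U. (g has_derivative (\<lambda>h. fst h *\<^sub>R g1 w + snd h *\<^sub>R g2 w)) (at w) \<and>
           (g1 has_derivative (\<lambda>h. fst h *\<^sub>R g11 w + snd h *\<^sub>R g12 w)) (at w) \<and>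
           (g2 has_derivative (\<lambda>h. fst h *\<^sub>R g21 w + snd h *\<^sub>R g22 w)) (at w)) \<and>
    continuous_on U g11 \<and> continuous_on U g12 \<and> continuous_on U g21 \<and> continuous_on U g22"

lemma C2_partials_on_continuous:
  assumes "C2_partials_on U g g1 g2 g11 g12 g21 g22"
  shows "continuous_on U g" "continuous_on U g1" "continuous_on U g2"
  using assms unfolding C2_partials_on_def
  by (meson continuous_at_imp_continuous_on has_derivative_continuous)+

lemma C2_partials_on_subset:
  assumes "C2_partials_on U g g1 g2 g11 g12 g21 g22" "V \<subseteq> U"
  shows "C2_partials_on V g g1 g2 g11 g12 g21 g22"
  using assms unfolding C2_partials_on_def by (meson continuous_on_subset subsetD)

lemma C2_partials_on_add_scaled:
  fixes u v :: "real \<times> real \<Rightarrow> real"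
  assumes du: "C2_partials_on U u u1 u2 u11 u12 u21 u22"
    and dv: "C2_partials_on U v v1 v2 v11 v12 v21 v22"
  shows "C2_partials_on U (\<lambda>x. u x + c * v x) (\<lambda>x. u1 x + c * v1 x) (\<lambda>x. u2 x + c * v2 x)
     (\<lambda>x. u11 x + c * v11 x) (\<lambda>x. u12 x + c * v12 x) (\<lambda>x. u21 x + c * v21 x) (\<lambda>x. u22 x + c * v22 x)"
  unfolding C2_partials_on_def
proof (intro conjI ballI)
  fix w assume w: "w \<in> U"
  have add: "((\<lambda>x. f x + c * g x) has_derivative
       (\<lambda>h. fst h *\<^sub>R (f1 w + c * g1 w) + snd h *\<^sub>R (f2 w + c * g2 w))) (at w)"
    if "(f has_derivative (\<lambda>h. fst h *\<^sub>R f1 w + snd h *\<^sub>R f2 w)) (at w)"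
      "(g has_derivative (\<lambda>h. fst h *\<^sub>R g1 w + snd h *\<^sub>R g2 w)) (at w)"
    for f f1 f2 g g1 g2 :: "real \<times> real \<Rightarrow> real"
    by (rule has_derivative_eq_rhs[OF has_derivative_add[OF that(1) has_derivative_mult_right[OF that(2)]]])
       (auto simp: algebra_simps)
  show "((\<lambda>x. u x + c * v x) has_derivative
      (\<lambda>h. fst h *\<^sub>R (u1 w + c * v1 w) + snd h *\<^sub>R (u2 w + c * v2 w))) (at w)"
    "((\<lambda>x. u1 x + c * v1 x) has_derivative
      (\<lambda>h. fst h *\<^sub>R (u11 w + c * v11 w) + snd h *\<^sub>R (u12 w + c * v12 w))) (at w)"
    "((\<lambda>x. u2 x + c * v2 x) has_derivative
      (\<lambda>h. fst h *\<^sub>R (u21 w + c * v21 w) + snd h *\<^sub>R (u22 w + c * v22 w))) (at w)"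
    using du dv w unfolding C2_partials_on_def by (intro add; auto)+
qed (use du dv in \<open>auto simp: C2_partials_on_def intro!: continuous_intros\<close>)

lemma C2_partials_on_minus:
  fixes u :: "real \<times> real \<Rightarrow> real"
  assumes "C2_partials_on U u u1 u2 u11 u12 u21 u22"
  shows "C2_partials_on U (\<lambda>x. - u x) (\<lambda>x. - u1 x) (\<lambda>x. - u2 x)
     (\<lambda>x. - u11 x) (\<lambda>x. - u12 x) (\<lambda>x. - u21 x) (\<lambda>x. - u22 x)"
  using assms unfolding C2_partials_on_def
  by (auto intro!: continuous_intros has_derivative_eq_rhs[OF has_derivative_minus] simp: algebra_simps)

lemma has_real_derivative_along_line:
  fixes g :: "real \<times> real \<Rightarrow> real"
  assumes "(g has_derivative (\<lambda>k. fst k *\<^sub>R a + snd k *\<^sub>R b)) (at (w + t *\<^sub>R h))"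
  shows "((\<lambda>s. g (w + s *\<^sub>R h)) has_real_derivative (fst h * a + snd h * b)) (at t)"
proof -
  have line: "((\<lambda>s. w + s *\<^sub>R h) has_derivative (\<lambda>s. s *\<^sub>R h)) (at t)"
    by (auto intro!: derivative_eq_intros)
  have "((\<lambda>s. g (w + s *\<^sub>R h)) has_derivative
      (\<lambda>s. fst (s *\<^sub>R h) *\<^sub>R a + snd (s *\<^sub>R h) *\<^sub>R b)) (at t)"
    using has_derivative_compose[OF line assms] by (simp add: o_def)
  moreover have "(\<lambda>s. fst (s *\<^sub>R h) *\<^sub>R a + snd (s *\<^sub>R h) *\<^sub>R b) = (*) (fst h * a + snd h * b)"
    by (auto simp: algebra_simps)
  ultimately show ?thesis by (simp add: has_field_derivative_def)
qed

lemma has_real_derivative_partial_fst: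
  fixes g :: "real \<times> real \<Rightarrow> real"
  assumes "(g has_derivative (\<lambda>k. fst k *\<^sub>R a + snd k *\<^sub>R b)) (at (x, y))"
  shows "((\<lambda>s. g (s, y)) has_real_derivative a) (at x)"
  using has_real_derivative_along_line[of g a b "(0, y)" x "(1, 0)"] assms by simp

lemma has_real_derivative_partial_snd:
  fixes g :: "real \<times> real \<Rightarrow> real"
  assumes "(g has_derivative (\<lambda>k. fst k *\<^sub>R a + snd k *\<^sub>R b)) (at (x, y))"
  shows "((\<lambda>s. g (x, s)) has_real_derivative b) (at y)"
  using has_real_derivative_along_line[of g a b "(x, 0)" y "(0, 1)"] assms by simp

lemma square_difference_mean_value_12:
  fixes g :: "real \<times> real \<Rightarrow> real"
  assumes t: "t > 0"
    and dg: "\<And>x y. a \<le> x \<Longrightarrow> x \<le> a + t \<Longrightarrow> b \<le> y \<Longrightarrow> y \<le> b + t \<Longrightarrow>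
      (g has_derivative (\<lambda>h. fst h *\<^sub>R g1 (x, y) + snd h *\<^sub>R g2 (x, y))) (at (x, y))"
    and dg1: "\<And>x y. a \<le> x \<Longrightarrow> x \<le> a + t \<Longrightarrow> b \<le> y \<Longrightarrow> y \<le> b + t \<Longrightarrow>
      (g1 has_derivative (\<lambda>h. fst h *\<^sub>R g11 (x, y) + snd h *\<^sub>R g12 (x, y))) (at (x, y))"
  obtains \<xi> \<eta> where "a < \<xi>" "\<xi> < a + t" "b < \<eta>" "\<eta> < b + t"
    "g (a + t, b + t) - g (a + t, b) - g (a, b + t) + g (a, b) = t * (t * g12 (\<xi>, \<eta>))"
proof -
  have "\<exists>\<xi>>a. \<xi> < a + t \<and> (\<lambda>x. g (x, b + t) - g (x, b)) (a + t) - (\<lambda>x. g (x, b + t) - g (x, b)) a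
      = (a + t - a) * (g1 (\<xi>, b + t) - g1 (\<xi>, b))"
    by (rule MVT2) (use t in \<open>auto intro!: derivative_intros has_real_derivative_partial_fst dg\<close>)
  then obtain \<xi> where \<xi>: "a < \<xi>" "\<xi> < a + t"
    "g (a + t, b + t) - g (a + t, b) - g (a, b + t) + g (a, b) = t * (g1 (\<xi>, b + t) - g1 (\<xi>, b))"
    by (auto simp: algebra_simps)
  have "\<exists>\<eta>>b. \<eta> < b + t \<and> (\<lambda>y. g1 (\<xi>, y)) (b + t) - (\<lambda>y. g1 (\<xi>, y)) b = (b + t - b) * g12 (\<xi>, \<eta>)"
    by (rule MVT2) (use t \<xi> in \<open>auto intro!: has_real_derivative_partial_snd dg1\<close>)
  then obtain \<eta> where "b < \<eta>" "\<eta> < b + t" "g1 (\<xi>, b + t) - g1 (\<xi>, b) = t * g12 (\<xi>, \<eta>)"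
    by auto
  with \<xi> show thesis using that by auto
qed

lemma square_difference_mean_value_21:
  fixes g :: "real \<times> real \<Rightarrow> real"
  assumes t: "t > 0"
    and dg: "\<And>x y. a \<le> x \<Longrightarrow> x \<le> a + t \<Longrightarrow> b \<le> y \<Longrightarrow> y \<le> b + t \<Longrightarrow>
      (g has_derivative (\<lambda>h. fst h *\<^sub>R g1 (x, y) + snd h *\<^sub>R g2 (x, y))) (at (x, y))"
    and dg2: "\<And>x y. a \<le> x \<Longrightarrow> x \<le> a + t \<Longrightarrow> b \<le> y \<Longrightarrow> y \<le> b + t \<Longrightarrow>
      (g2 has_derivative (\<lambda>h. fst h *\<^sub>R g21 (x, y) + snd h *\<^sub>R g22 (x, y))) (at (x, y))"
  obtains \<xi> \<eta> where "a < \<xi>" "\<xi> < a + t" "b < \<eta>" "\<eta> < b + t"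
    "g (a + t, b + t) - g (a + t, b) - g (a, b + t) + g (a, b) = t * (t * g21 (\<xi>, \<eta>))"
proof -
  have "\<exists>\<eta>>b. \<eta> < b + t \<and> (\<lambda>y. g (a + t, y) - g (a, y)) (b + t) - (\<lambda>y. g (a + t, y) - g (a, y)) b
      = (b + t - b) * (g2 (a + t, \<eta>) - g2 (a, \<eta>))"
    by (rule MVT2) (use t in \<open>auto intro!: derivative_intros has_real_derivative_partial_snd dg\<close>)
  then obtain \<eta> where \<eta>: "b < \<eta>" "\<eta> < b + t"
    "g (a + t, b + t) - g (a + t, b) - g (a, b + t) + g (a, b) = t * (g2 (a + t, \<eta>) - g2 (a, \<eta>))"
    by (auto simp: algebra_simps)
  have "\<exists>\<xi>>a. \<xi> < a + t \<and> (\<lambda>x. g2 (x, \<eta>)) (a + t) - (\<lambda>x. g2 (x, \<eta>)) a = (a + t - a) * g21 (\<xi>, \<eta>)"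
    by (rule MVT2) (use t \<eta> in \<open>auto intro!: has_real_derivative_partial_fst dg2\<close>)
  then obtain \<xi> where "a < \<xi>" "\<xi> < a + t" "g2 (a + t, \<eta>) - g2 (a, \<eta>) = t * g21 (\<xi>, \<eta>)"
    by auto
  with \<eta> show thesis using that by auto
qed

lemma C2_partials_on_mixed_eq:
  fixes g :: "real \<times> real \<Rightarrow> real"
  assumes U: "open U" and d: "C2_partials_on U g g1 g2 g11 g12 g21 g22" and w: "w \<in> U"
  shows "g12 w = g21 w"
proof (rule ccontr)
  assume ne: "g12 w \<noteq> g21 w"
  define e where "e = \<bar>g12 w - g21 w\<bar> / 2"
  have e: "e > 0" using ne by (simp add: e_def)
  obtain r where r: "r > 0" "ball w r \<subseteq> U" using U w open_contains_ball by blast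
  obtain r12 where r12: "r12 > 0" "\<And>x. x \<in> U \<Longrightarrow> dist x w < r12 \<Longrightarrow> dist (g12 x) (g12 w) < e"
    using d w e unfolding C2_partials_on_def continuous_on_iff by metis
  obtain r21 where r21: "r21 > 0" "\<And>x. x \<in> U \<Longrightarrow> dist x w < r21 \<Longrightarrow> dist (g21 x) (g21 w) < e"
    using d w e unfolding C2_partials_on_def continuous_on_iff by metis
  define t where "t = min r (min r12 r21) / 4"
  have t: "t > 0" "2 * t < r" "2 * t < r12" "2 * t < r21" using r r12 r21 by (auto simp: t_def)
  obtain a b where wab: "w = (a, b)" by (cases w)
  have near: "dist (x, y) w \<le> 2 * t"
    if "a \<le> x" "x \<le> a + t" "b \<le> y" "y \<le> b + t" for x y
  proof -
    have "dist (x, y) w \<le> \<bar>x - a\<bar> + \<bar>y - b\<bar>"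
      using wab by (simp add: dist_Pair_Pair dist_real_def sqrt_sum_squares_le_sum_abs)
    then show ?thesis using that by auto
  qed
  have inU: "(x, y) \<in> U" if "a \<le> x" "x \<le> a + t" "b \<le> y" "y \<le> b + t" for x y
    using near[OF that] t r(2) by (auto simp: dist_commute)
  have dg: "(g has_derivative (\<lambda>h. fst h *\<^sub>R g1 (x, y) + snd h *\<^sub>R g2 (x, y))) (at (x, y))"
    "(g1 has_derivative (\<lambda>h. fst h *\<^sub>R g11 (x, y) + snd h *\<^sub>R g12 (x, y))) (at (x, y))"
    "(g2 has_derivative (\<lambda>h. fst h *\<^sub>R g21 (x, y) + snd h *\<^sub>R g22 (x, y))) (at (x, y))"
    if "a \<le> x" "x \<le> a + t" "b \<le> y" "y \<le> b + t" for x y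
    using d inU[OF that] unfolding C2_partials_on_def by blast+
  obtain \<xi> \<eta> where "a < \<xi>" "\<xi> < a + t" "b < \<eta>" "\<eta> < b + t"
    and D12: "g (a + t, b + t) - g (a + t, b) - g (a, b + t) + g (a, b) = t * (t * g12 (\<xi>, \<eta>))"
    by (rule square_difference_mean_value_12[OF t(1) dg(1,2)])
  then have "\<bar>g12 (\<xi>, \<eta>) - g12 w\<bar> < e"
    using near[of \<xi> \<eta>] inU[of \<xi> \<eta>] r12(2)[of "(\<xi>, \<eta>)"] t by (auto simp: dist_real_def)
  moreover obtain \<xi>' \<eta>' where "a < \<xi>'" "\<xi>' < a + t" "b < \<eta>'" "\<eta>' < b + t"
    and D21: "g (a + t, b + t) - g (a + t, b) - g (a, b + t) + g (a, b) = t * (t * g21 (\<xi>', \<eta>'))"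
    by (rule square_difference_mean_value_21[OF t(1) dg(1,3)])
  then have "\<bar>g21 (\<xi>', \<eta>') - g21 w\<bar> < e"
    using near[of \<xi>' \<eta>'] inU[of \<xi>' \<eta>'] r21(2)[of "(\<xi>', \<eta>')"] t by (auto simp: dist_real_def)
  moreover have "g12 (\<xi>, \<eta>) = g21 (\<xi>', \<eta>')" using D12 D21 t(1) by simp
  ultimately show False by (simp add: e_def abs_if split: if_split_asm)
qed

section \<open>Maximum principles\<close>

lemma local_max_second_derivative_nonpos:
  fixes \<gamma> \<gamma>' \<gamma>'' :: "real \<Rightarrow> real"
  assumes r: "r > 0"
    and d1: "\<And>t. \<bar>t\<bar> < r \<Longrightarrow> (\<gamma> has_real_derivative \<gamma>' t) (at t)"
    and d2: "\<And>t. \<bar>t\<bar> < r \<Longrightarrow> (\<gamma>' has_real_derivative \<gamma>'' t) (at t)"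
    and cont: "isCont \<gamma>'' 0"
    and max: "\<And>t. \<bar>t\<bar> < r \<Longrightarrow> \<gamma> t \<le> \<gamma> 0"
  shows "\<gamma>' 0 = 0" "\<gamma>'' 0 \<le> 0"
proof -
  show crit: "\<gamma>' 0 = 0"
    by (rule DERIV_local_max[OF d1[of 0] r]) (use r max in auto)
  show "\<gamma>'' 0 \<le> 0"
  proof (rule ccontr)
    assume "\<not> \<gamma>'' 0 \<le> 0"
    then have "\<forall>\<^sub>F t in at 0. 0 < \<gamma>'' t"
      using cont by (intro order_tendstoD(1)) (auto simp: isCont_def)
    then obtain \<delta> where \<delta>: "\<delta> > 0" "\<And>t. t \<noteq> 0 \<Longrightarrow> \<bar>t\<bar> < \<delta> \<Longrightarrow> 0 < \<gamma>'' t"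
      by (auto simp: eventually_at dist_real_def)
    define t where "t = min \<delta> r / 2"
    have t: "0 < t" "t < \<delta>" "t < r" using \<delta> r by (auto simp: t_def)
    obtain \<xi> where \<xi>: "0 < \<xi>" "\<xi> < t" "\<gamma> t - \<gamma> 0 = (t - 0) * \<gamma>' \<xi>"
      using MVT2[of 0 t \<gamma> \<gamma>'] t d1 by auto
    obtain \<eta> where \<eta>: "0 < \<eta>" "\<eta> < \<xi>" "\<gamma>' \<xi> - \<gamma>' 0 = (\<xi> - 0) * \<gamma>'' \<eta>"
      using MVT2[of 0 \<xi> \<gamma>' \<gamma>''] t d2 \<xi> by auto
    have "0 < \<gamma>'' \<eta>" using \<delta>(2)[of \<eta>] \<eta> \<xi> t by auto
    then have "0 < t * (\<xi> * \<gamma>'' \<eta>)" using \<xi> t by simp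
    then have "\<gamma> 0 < \<gamma> t" using \<xi> \<eta> crit by simp
    then show False using max[of t] t by simp
  qed
qed

lemma C2_partials_on_interior_max:
  fixes u :: "real \<times> real \<Rightarrow> real"
  assumes U: "open U" and d: "C2_partials_on U u u1 u2 u11 u12 u21 u22" and w0: "w0 \<in> U"
    and max: "\<And>w. w \<in> U \<Longrightarrow> u w \<le> u w0"
  shows "u1 w0 = 0" "u2 w0 = 0"
    "\<And>h1 h2. h1\<^sup>2 * u11 w0 + 2 * h1 * h2 * u12 w0 + h2\<^sup>2 * u22 w0 \<le> 0"
proof -
  obtain r where r: "r > 0" "ball w0 r \<subseteq> U" using U w0 open_contains_ball by blast
  have du: "(u has_derivative (\<lambda>h. fst h *\<^sub>R u1 w + snd h *\<^sub>R u2 w)) (at w)"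
    "(u1 has_derivative (\<lambda>h. fst h *\<^sub>R u11 w + snd h *\<^sub>R u12 w)) (at w)"
    "(u2 has_derivative (\<lambda>h. fst h *\<^sub>R u21 w + snd h *\<^sub>R u22 w)) (at w)"
    if "w \<in> U" for w
    using d that by (auto simp: C2_partials_on_def)
  have isCont_line: "isCont (\<lambda>t. g (w0 + t *\<^sub>R h)) 0"
    if "continuous_on U g" for g :: "real \<times> real \<Rightarrow> real" and h :: "real \<times> real"
  proof -
    have "isCont g w0" using that U w0 continuous_on_eq_continuous_at by blast
    moreover have "isCont (\<lambda>t. w0 + t *\<^sub>R h) 0" by (intro continuous_intros)
    ultimately show ?thesis using isCont_o2[where f="\<lambda>t. w0 + t *\<^sub>R h" and a=0 and g=g] by simp
  qed
  have along_line: "fst h * u1 w0 + snd h * u2 w0 = 0 \<and>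
      fst h * (fst h * u11 w0 + snd h * u12 w0) + snd h * (fst h * u21 w0 + snd h * u22 w0) \<le> 0" for h
  proof -
    define \<rho> where "\<rho> = r / (norm h + 1)"
    have \<rho>: "\<rho> > 0" using r by (simp add: \<rho>_def add_nonneg_pos)
    have inU: "w0 + t *\<^sub>R h \<in> U" if "\<bar>t\<bar> < \<rho>" for t
    proof -
      have "norm (t *\<^sub>R h) \<le> \<bar>t\<bar> * (norm h + 1)" by (simp add: mult_left_mono)
      also have "\<dots> < r" using that by (simp add: \<rho>_def pos_less_divide_eq add_nonneg_pos)
      finally show ?thesis using r(2) by (auto simp: dist_norm)
    qed
    let ?p = "\<lambda>t. w0 + t *\<^sub>R h"
    let ?u' = "\<lambda>t. fst h * u1 (?p t) + snd h * u2 (?p t)"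
    let ?u'' = "\<lambda>t. fst h * (fst h * u11 (?p t) + snd h * u12 (?p t)) + snd h * (fst h * u21 (?p t) + snd h * u22 (?p t))"
    have d1: "((\<lambda>t. u (?p t)) has_real_derivative ?u' t) (at t)" if "\<bar>t\<bar> < \<rho>" for t
      by (rule has_real_derivative_along_line[OF du(1)[OF inU[OF that]]])
    have d2: "(?u' has_real_derivative ?u'' t) (at t)" if "\<bar>t\<bar> < \<rho>" for t
      by (intro DERIV_add DERIV_cmult has_real_derivative_along_line du inU that)
    have cont: "isCont ?u'' 0"
      using d unfolding C2_partials_on_def by (intro continuous_intros isCont_line) auto
    have max_line: "u (?p t) \<le> u (?p 0)" if "\<bar>t\<bar> < \<rho>" for t
      using max[OF inU[OF that]] by simp
    from local_max_second_derivative_nonpos[OF \<rho> d1 d2 cont max_line] show ?thesis by simp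
  qed
  show "u1 w0 = 0" using along_line[of "(1, 0)"] by simp
  show "u2 w0 = 0" using along_line[of "(0, 1)"] by simp
  have "u12 w0 = u21 w0" by (rule C2_partials_on_mixed_eq[OF U d w0])
  then show "h1\<^sup>2 * u11 w0 + 2 * h1 * h2 * u12 w0 + h2\<^sup>2 * u22 w0 \<le> 0" for h1 h2
    using along_line[of "(h1, h2)"] by (simp add: power2_eq_square algebra_simps)
qed

lemma psd_nsd_trace_nonpos:
  fixes a11 a12 a22 q11 q12 q22 :: real
  assumes a: "a11 \<ge> 0" "a22 \<ge> 0" "a12\<^sup>2 \<le> a11 * a22"
    and q: "\<And>h1 h2. h1\<^sup>2 * q11 + 2 * h1 * h2 * q12 + h2\<^sup>2 * q22 \<le> 0"
  shows "a11 * q11 + 2 * a12 * q12 + a22 * q22 \<le> 0"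
proof -
  have q11: "q11 \<le> 0" using q[of 1 0] by simp
  have q22: "q22 \<le> 0" using q[of 0 1] by simp
  have qq: "q12\<^sup>2 \<le> q11 * q22"
  proof (cases "q22 = 0")
    case True
    have "q12 = 0"
    proof (rule ccontr)
      assume "q12 \<noteq> 0"
      then show False using q[of 1 "(1 - q11) / (2 * q12)"] True by (simp add: field_simps)
    qed
    then show ?thesis using True by simp
  next
    case False
    have "q22 * (q11 * q22 - q12\<^sup>2) \<le> 0"
      using q[of q22 "- q12"] by (simp add: algebra_simps power2_eq_square)
    then show ?thesis using False q22 by (simp add: mult_le_0_iff)
  qed
  define A where "A = a11 * (- q11)"
  define B where "B = a22 * (- q22)"
  define C where "C = \<bar>a12 * q12\<bar>"
  have AB: "A \<ge> 0" "B \<ge> 0" using a q11 q22 by (auto simp: A_def B_def mult_nonneg_nonpos)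
  have "C\<^sup>2 = a12\<^sup>2 * q12\<^sup>2" by (simp add: C_def power_mult_distrib)
  also have "\<dots> \<le> (a11 * a22) * (q11 * q22)"
    using a qq by (intro mult_mono') auto
  also have "\<dots> = A * B" by (simp add: A_def B_def)
  finally have "C\<^sup>2 \<le> A * B" .
  moreover have "4 * (A * B) \<le> (A + B)\<^sup>2"
    using zero_le_power2[of "A - B"] by (simp add: power2_eq_square algebra_simps)
  ultimately have "(2 * C)\<^sup>2 \<le> (A + B)\<^sup>2" by (simp add: power_mult_distrib)
  then have "2 * C \<le> A + B" by (rule power2_le_imp_le) (use AB in simp)
  moreover have "a12 * q12 \<le> C" by (simp add: C_def)
  ultimately show ?thesis by (simp add: A_def B_def)
qed

lemma elliptic_op_nonpos_at_max:
  fixes u :: "real \<times> real \<Rightarrow> real"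
  assumes "open U" and "C2_partials_on U u u1 u2 u11 u12 u21 u22" and "w0 \<in> U"
    and "\<And>w. w \<in> U \<Longrightarrow> u w \<le> u w0"
    and a: "a11 > 0" "a12\<^sup>2 < a11 * a22"
  shows "a11 * u11 w0 + 2 * a12 * u12 w0 + a22 * u22 w0 + b1 * u1 w0 + b2 * u2 w0 \<le> 0"
proof -
  have "a22 \<ge> 0" using a by (smt (verit) mult_nonneg_nonpos zero_le_power2)
  then have "a11 * u11 w0 + 2 * a12 * u12 w0 + a22 * u22 w0 \<le> 0"
    using a psd_nsd_trace_nonpos[OF _ _ _ C2_partials_on_interior_max(3)[OF assms(1-4)]] by simp
  then show ?thesis using C2_partials_on_interior_max(1,2)[OF assms(1-4)] by simp
qed

definition gauss_barrier :: "real \<Rightarrow> real \<times> real \<Rightarrow> real \<times> real \<Rightarrow> real" where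
  "gauss_barrier \<gamma> c x = exp (- \<gamma> * ((fst x - fst c)\<^sup>2 + (snd x - snd c)\<^sup>2))"

lemma gauss_barrier_eq_dist: "gauss_barrier \<gamma> c x = exp (- \<gamma> * (dist x c)\<^sup>2)"
  by (cases x; cases c) (simp add: gauss_barrier_def dist_Pair_Pair dist_real_def)

lemma gauss_barrier_pos: "gauss_barrier \<gamma> c x > 0"
  by (simp add: gauss_barrier_def)

lemma gauss_barrier_le_1: "\<gamma> \<ge> 0 \<Longrightarrow> gauss_barrier \<gamma> c x \<le> 1"
  by (simp add: gauss_barrier_eq_dist)

lemma gauss_barrier_less:
  "\<gamma> > 0 \<Longrightarrow> dist y c < dist x c \<Longrightarrow> gauss_barrier \<gamma> c x < gauss_barrier \<gamma> c y"
  by (simp add: gauss_barrier_eq_dist power_strict_mono)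

lemma continuous_on_gauss_barrier [continuous_intros]: "continuous_on S (gauss_barrier \<gamma> c)"
  unfolding gauss_barrier_def by (intro continuous_intros)

lemma gauss_barrier_has_derivative:
  "(gauss_barrier \<gamma> c has_derivative (\<lambda>h.
      fst h *\<^sub>R (-2 * \<gamma> * (fst x - fst c) * gauss_barrier \<gamma> c x) +
      snd h *\<^sub>R (-2 * \<gamma> * (snd x - snd c) * gauss_barrier \<gamma> c x))) (at x)"
  unfolding gauss_barrier_def
  by (rule has_derivative_eq_rhs, (rule derivative_eq_intros refl)+)
     (auto simp: fun_eq_iff algebra_simps power2_eq_square)

lemma C2_partials_on_gauss_barrier:
  "C2_partials_on U (gauss_barrier \<gamma> c)
     (\<lambda>x. -2 * \<gamma> * (fst x - fst c) * gauss_barrier \<gamma> c x)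
     (\<lambda>x. -2 * \<gamma> * (snd x - snd c) * gauss_barrier \<gamma> c x)
     (\<lambda>x. (4 * \<gamma>\<^sup>2 * (fst x - fst c)\<^sup>2 - 2 * \<gamma>) * gauss_barrier \<gamma> c x)
     (\<lambda>x. 4 * \<gamma>\<^sup>2 * (fst x - fst c) * (snd x - snd c) * gauss_barrier \<gamma> c x)
     (\<lambda>x. 4 * \<gamma>\<^sup>2 * (fst x - fst c) * (snd x - snd c) * gauss_barrier \<gamma> c x)
     (\<lambda>x. (4 * \<gamma>\<^sup>2 * (snd x - snd c)\<^sup>2 - 2 * \<gamma>) * gauss_barrier \<gamma> c x)"
  unfolding C2_partials_on_def
proof (intro conjI ballI)
  fix x :: "real \<times> real"
  show "(gauss_barrier \<gamma> c has_derivative (\<lambda>h.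
      fst h *\<^sub>R (-2 * \<gamma> * (fst x - fst c) * gauss_barrier \<gamma> c x) +
      snd h *\<^sub>R (-2 * \<gamma> * (snd x - snd c) * gauss_barrier \<gamma> c x))) (at x)"
    by (rule gauss_barrier_has_derivative)
  show "((\<lambda>x. -2 * \<gamma> * (fst x - fst c) * gauss_barrier \<gamma> c x) has_derivative (\<lambda>h.
      fst h *\<^sub>R ((4 * \<gamma>\<^sup>2 * (fst x - fst c)\<^sup>2 - 2 * \<gamma>) * gauss_barrier \<gamma> c x) +
      snd h *\<^sub>R (4 * \<gamma>\<^sup>2 * (fst x - fst c) * (snd x - snd c) * gauss_barrier \<gamma> c x))) (at x)"
    "((\<lambda>x. -2 * \<gamma> * (snd x - snd c) * gauss_barrier \<gamma> c x) has_derivative (\<lambda>h.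
      fst h *\<^sub>R (4 * \<gamma>\<^sup>2 * (fst x - fst c) * (snd x - snd c) * gauss_barrier \<gamma> c x) +
      snd h *\<^sub>R ((4 * \<gamma>\<^sup>2 * (snd x - snd c)\<^sup>2 - 2 * \<gamma>) * gauss_barrier \<gamma> c x))) (at x)"
    by (rule has_derivative_eq_rhs, (rule derivative_eq_intros gauss_barrier_has_derivative refl)+,
        auto simp: fun_eq_iff algebra_simps power2_eq_square)+
qed (intro continuous_intros)+

lemma compact_dominated_by_multiple:
  fixes f g :: "'a::topological_space \<Rightarrow> real"
  assumes K: "compact K" and "continuous_on K f" "continuous_on K g" and pos: "\<And>x. x \<in> K \<Longrightarrow> 0 < g x"
  obtains c where "c > 0" "\<And>x. x \<in> K \<Longrightarrow> f x < c * g x"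
proof (cases "K = {}")
  case False
  obtain xm where xm: "xm \<in> K" "\<And>x. x \<in> K \<Longrightarrow> g xm \<le> g x"
    using continuous_attains_inf[OF K False assms(3)] by blast
  obtain xM where xM: "xM \<in> K" "\<And>x. x \<in> K \<Longrightarrow> f x \<le> f xM"
    using continuous_attains_sup[OF K False assms(2)] by blast
  define c where "c = (\<bar>f xM\<bar> + 1) / g xm"
  have gm: "g xm > 0" using pos[OF xm(1)] .
  then have c: "c > 0" by (simp add: c_def add_nonneg_pos)
  show thesis
  proof (rule that[OF c])
    fix x assume x: "x \<in> K"
    have "f x < \<bar>f xM\<bar> + 1" using xM(2)[OF x] by linarith
    also have "\<dots> = c * g xm" using gm by (simp add: c_def)
    also have "\<dots> \<le> c * g x" using xm(2)[OF x] c by simp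
    finally show "f x < c * g x" .
  qed
qed (use that[of 1] in simp)

lemma compact_uniformly_below:
  fixes f :: "'a::topological_space \<Rightarrow> real"
  assumes K: "compact K" and "continuous_on K f" and below: "\<And>x. x \<in> K \<Longrightarrow> f x < m"
  obtains \<delta> where "\<delta> > 0" "\<And>x. x \<in> K \<Longrightarrow> f x \<le> m - \<delta>"
proof (cases "K = {}")
  case False
  obtain xM where xM: "xM \<in> K" "\<And>x. x \<in> K \<Longrightarrow> f x \<le> f xM"
    using continuous_attains_sup[OF K False assms(2)] by blast
  show thesis by (rule that[of "m - f xM"]) (use below[OF xM(1)] xM(2) in auto)
qed (use that[of 1] in simp)

lemma dist_lt_if_in_half_ball:
  fixes x y z :: "'a::real_inner"
  assumes "dist (midpoint z y) x \<le> dist z y / 2" and "x \<noteq> y"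
  shows "dist z x < dist z y"
proof -
  have parallelogram: "2 * (dist z x)\<^sup>2 + 2 * (dist y x)\<^sup>2 = 4 * (dist (midpoint z y) x)\<^sup>2 + (dist z y)\<^sup>2"
    by (simp add: dist_norm midpoint_def power2_norm_eq_inner inner_simps algebra_simps)
  have "4 * (dist (midpoint z y) x)\<^sup>2 \<le> (dist z y)\<^sup>2"
    using power_mono[OF assms(1), of 2] by (simp add: power_divide)
  moreover have "(dist y x)\<^sup>2 > 0" using assms(2) by simp
  ultimately have "(dist z x)\<^sup>2 < (dist z y)\<^sup>2" using parallelogram by linarith
  then show ?thesis by (simp add: power_less_imp_less_base)
qed

lemma pos_def_quadratic_form_pos:
  fixes a11 a12 a22 s t :: real
  assumes "a11 > 0" "a12\<^sup>2 < a11 * a22" "(s, t) \<noteq> (0, 0)"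
  shows "a11 * s\<^sup>2 + 2 * a12 * s * t + a22 * t\<^sup>2 > 0"
proof (cases "t = 0")
  case False
  have "a11 * (a11 * s\<^sup>2 + 2 * a12 * s * t + a22 * t\<^sup>2) = (a11 * s + a12 * t)\<^sup>2 + (a11 * a22 - a12\<^sup>2) * t\<^sup>2"
    by (simp add: power2_eq_square algebra_simps)
  moreover have "(a11 * a22 - a12\<^sup>2) * t\<^sup>2 > 0" using False assms(2) by simp
  ultimately have "a11 * (a11 * s\<^sup>2 + 2 * a12 * s * t + a22 * t\<^sup>2) > 0"
    by (smt (verit) zero_le_power2)
  then show ?thesis using assms(1) by (simp add: zero_less_mult_iff)
qed (use assms in simp)

lemma exists_gauss_barrier_exponent:
  fixes a11 a12 a22 b1 b2 :: "real \<times> real \<Rightarrow> real"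
  assumes K: "compact K" "c \<notin> K"
    and coeffs: "continuous_on K a11" "continuous_on K a12" "continuous_on K a22"
      "continuous_on K b1" "continuous_on K b2"
    and elliptic: "\<And>w. w \<in> K \<Longrightarrow> a11 w > 0 \<and> (a12 w)\<^sup>2 < a11 w * a22 w"
  obtains \<gamma> where "\<gamma> > 0" "\<And>x. x \<in> K \<Longrightarrow>
    a11 x + a22 x + b1 x * (fst x - fst c) + b2 x * (snd x - snd c)
    < 2 * \<gamma> * (a11 x * (fst x - fst c)\<^sup>2 + 2 * a12 x * (fst x - fst c) * (snd x - snd c)
      + a22 x * (snd x - snd c)\<^sup>2)"
proof -
  have pos: "0 < 2 * (a11 x * (fst x - fst c)\<^sup>2 + 2 * a12 x * (fst x - fst c) * (snd x - snd c)
      + a22 x * (snd x - snd c)\<^sup>2)" if "x \<in> K" for x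
  proof -
    have "x \<noteq> c" using that K(2) by auto
    then have "(fst x - fst c, snd x - snd c) \<noteq> (0, 0)" by (simp add: prod_eq_iff)
    with elliptic[OF that] have "0 < a11 x * (fst x - fst c)\<^sup>2
        + 2 * a12 x * (fst x - fst c) * (snd x - snd c) + a22 x * (snd x - snd c)\<^sup>2"
      by (intro pos_def_quadratic_form_pos) auto
    then show ?thesis by simp
  qed
  have cont: "continuous_on K (\<lambda>x. a11 x + a22 x + b1 x * (fst x - fst c) + b2 x * (snd x - snd c))"
    "continuous_on K (\<lambda>x. 2 * (a11 x * (fst x - fst c)\<^sup>2
      + 2 * a12 x * (fst x - fst c) * (snd x - snd c) + a22 x * (snd x - snd c)\<^sup>2))"
    by (intro continuous_intros coeffs)+
  obtain \<kappa> where "\<kappa> > 0" "\<And>x. x \<in> K \<Longrightarrow>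
    a11 x + a22 x + b1 x * (fst x - fst c) + b2 x * (snd x - snd c)
    < \<kappa> * (2 * (a11 x * (fst x - fst c)\<^sup>2 + 2 * a12 x * (fst x - fst c) * (snd x - snd c)
      + a22 x * (snd x - snd c)\<^sup>2))"
    using compact_dominated_by_multiple[OF K(1) cont pos] by blast
  then show thesis using that[of \<kappa>] by (simp add: mult.assoc mult.left_commute)
qed

lemma barrier_perturbation_no_max:
  fixes u :: "real \<times> real \<Rightarrow> real" and a11 a12 a22 b1 b2 :: real
  assumes V: "open V" and d: "C2_partials_on V u u1 u2 u11 u12 u21 u22" and p: "p \<in> V"
    and elliptic: "a11 > 0" "a12\<^sup>2 < a11 * a22"
    and Lu: "a11 * u11 p + 2 * a12 * u12 p + a22 * u22 p + b1 * u1 p + b2 * u2 p \<ge> 0"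
    and \<gamma>: "\<gamma> > 0" "a11 + a22 + b1 * (fst p - fst c) + b2 * (snd p - snd c)
      < 2 * \<gamma> * (a11 * (fst p - fst c)\<^sup>2 + 2 * a12 * (fst p - fst c) * (snd p - snd c)
        + a22 * (snd p - snd c)\<^sup>2)"
    and \<delta>: "\<delta> > 0"
    and max: "\<And>x. x \<in> V \<Longrightarrow> u x + \<delta> * gauss_barrier \<gamma> c x \<le> u p + \<delta> * gauss_barrier \<gamma> c p"
  shows False
proof -
  define v where "v = gauss_barrier \<gamma> c"
  have "C2_partials_on V (\<lambda>x. u x + \<delta> * v x)
     (\<lambda>x. u1 x + \<delta> * (-2 * \<gamma> * (fst x - fst c) * v x))
     (\<lambda>x. u2 x + \<delta> * (-2 * \<gamma> * (snd x - snd c) * v x))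
     (\<lambda>x. u11 x + \<delta> * ((4 * \<gamma>\<^sup>2 * (fst x - fst c)\<^sup>2 - 2 * \<gamma>) * v x))
     (\<lambda>x. u12 x + \<delta> * (4 * \<gamma>\<^sup>2 * (fst x - fst c) * (snd x - snd c) * v x))
     (\<lambda>x. u21 x + \<delta> * (4 * \<gamma>\<^sup>2 * (fst x - fst c) * (snd x - snd c) * v x))
     (\<lambda>x. u22 x + \<delta> * ((4 * \<gamma>\<^sup>2 * (snd x - snd c)\<^sup>2 - 2 * \<gamma>) * v x))"
    unfolding v_def by (intro C2_partials_on_add_scaled d C2_partials_on_gauss_barrier)
  note max_op = elliptic_op_nonpos_at_max[OF V this p _ elliptic]
  let ?s = "fst p - fst c" and ?t = "snd p - snd c"
  have "a11 * u11 p + 2 * a12 * u12 p + a22 * u22 p + b1 * u1 p + b2 * u2 p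
      + \<delta> * (2 * \<gamma> * v p * (2 * \<gamma> * (a11 * ?s\<^sup>2 + 2 * a12 * ?s * ?t + a22 * ?t\<^sup>2)
        - (a11 + a22 + b1 * ?s + b2 * ?t)))
    = a11 * (u11 p + \<delta> * ((4 * \<gamma>\<^sup>2 * ?s\<^sup>2 - 2 * \<gamma>) * v p))
      + 2 * a12 * (u12 p + \<delta> * (4 * \<gamma>\<^sup>2 * ?s * ?t * v p))
      + a22 * (u22 p + \<delta> * ((4 * \<gamma>\<^sup>2 * ?t\<^sup>2 - 2 * \<gamma>) * v p))
      + b1 * (u1 p + \<delta> * (-2 * \<gamma> * ?s * v p)) + b2 * (u2 p + \<delta> * (-2 * \<gamma> * ?t * v p))"
    (is "?Lu + ?Lv = _")
    by (simp add: power2_eq_square algebra_simps)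
  also have "\<dots> \<le> 0" by (rule max_op) (use max in \<open>simp add: v_def\<close>)
  finally have "?Lu + ?Lv \<le> 0" .
  moreover have "0 < ?Lv" using \<gamma> \<delta> by (simp add: v_def gauss_barrier_pos)
  ultimately show False using Lu by linarith
qed

text \<open>Hopf's comparison argument: \<open>u\<close> stays below its maximum on the part of \<open>sphere y r\<close>
  inside the ball touching \<open>y\<close>, and outside that ball the barrier is smaller than at \<open>y\<close>; so
  \<open>u + \<delta> \<cdot> barrier\<close> attains its maximum over \<open>cball y r\<close> in the interior.\<close>

lemma Hopf_touching_ball:
  fixes u a11 a12 a22 b1 b2 :: "real \<times> real \<Rightarrow> real"
  assumes U: "open U" and d: "C2_partials_on U u u1 u2 u11 u12 u21 u22"
    and coeffs: "continuous_on U a11" "continuous_on U a12" "continuous_on U a22"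
      "continuous_on U b1" "continuous_on U b2"
    and elliptic: "\<And>w. w \<in> U \<Longrightarrow> a11 w > 0 \<and> (a12 w)\<^sup>2 < a11 w * a22 w"
    and L: "\<And>w. w \<in> U \<Longrightarrow>
      a11 w * u11 w + 2 * a12 w * u12 w + a22 w * u22 w + b1 w * u1 w + b2 w * u2 w \<ge> 0"
    and max: "\<And>w. w \<in> U \<Longrightarrow> u w \<le> u y"
    and r: "r > 0" "cball y r \<subseteq> U" and c: "dist y c = 2 * r"
  shows "\<exists>x\<in>sphere y r. dist c x \<le> 2 * r \<and> u x = u y"
proof (rule ccontr)
  define S where "S = sphere y r \<inter> cball c (2 * r)"
  assume "\<not> ?thesis"
  then have below: "u x < u y" if "x \<in> S" for x
    using max[of x] that r(2) by (force simp: S_def)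
  have cu: "continuous_on U u" using C2_partials_on_continuous(1)[OF d] .
  define K where "K = cball y r"
  have K: "compact K" "K \<subseteq> U" "c \<notin> K" using r c by (auto simp: K_def)
  have cK: "continuous_on K a11" "continuous_on K a12" "continuous_on K a22"
    "continuous_on K b1" "continuous_on K b2"
    using coeffs K(2) by (meson continuous_on_subset)+
  obtain \<gamma> where \<gamma>: "\<gamma> > 0" "\<And>x. x \<in> K \<Longrightarrow>
    a11 x + a22 x + b1 x * (fst x - fst c) + b2 x * (snd x - snd c)
    < 2 * \<gamma> * (a11 x * (fst x - fst c)\<^sup>2 + 2 * a12 x * (fst x - fst c) * (snd x - snd c)
      + a22 x * (snd x - snd c)\<^sup>2)"
    by (rule exists_gauss_barrier_exponent[OF K(1,3) cK]) (use elliptic K(2) in auto)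
  obtain \<delta> where \<delta>: "\<delta> > 0" "\<And>x. x \<in> S \<Longrightarrow> u x \<le> u y - \<delta>"
  proof (rule compact_uniformly_below[of S u])
    show "compact S" by (auto simp: S_def intro: compact_Int_closed)
    show "continuous_on S u" using cu r(2) by (auto simp: S_def elim!: continuous_on_subset)
  qed (use below in auto)
  define v where "v = gauss_barrier \<gamma> c"
  define W where "W x = u x + \<delta> * v x" for x
  have "continuous_on K W"
    using cu K(2) unfolding W_def v_def by (auto intro!: continuous_intros elim: continuous_on_subset)
  moreover have "K \<noteq> {}" using r(1) by (simp add: K_def)
  ultimately obtain p where p: "p \<in> K" "\<And>x. x \<in> K \<Longrightarrow> W x \<le> W p"
    using continuous_attains_sup[OF K(1)] by blast
  have "W x < W y" if "x \<in> sphere y r" for x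
  proof (cases "dist c x \<le> 2 * r")
    case True
    then have "u x \<le> u y - \<delta>" using \<delta>(2) that by (simp add: S_def dist_commute)
    moreover have "v x \<le> 1" "v y > 0" using \<gamma>(1) by (simp_all add: v_def gauss_barrier_le_1 gauss_barrier_pos)
    moreover have "\<delta> * v x \<le> \<delta>" "0 < \<delta> * v y"
      using \<delta>(1) \<open>v x \<le> 1\<close> \<open>v y > 0\<close> by (simp_all add: mult_left_le)
    ultimately show ?thesis unfolding W_def by linarith
  next
    case False
    then have "v x < v y" using c \<gamma>(1) by (simp add: v_def gauss_barrier_less dist_commute)
    then have "\<delta> * v x < \<delta> * v y" using \<delta>(1) by simp
    moreover have "u x \<le> u y" using max r(2) that sphere_cball by blast
    ultimately show ?thesis unfolding W_def by linarith
  qed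
  moreover have "W y \<le> W p" using p(2) r(1) by (simp add: K_def)
  ultimately have p_in: "p \<in> ball y r" using p(1) unfolding K_def
    by (metis mem_ball mem_cball mem_sphere order_le_less not_less)
  then have "p \<in> U" using r(2) by auto
  have dB: "C2_partials_on (ball y r) u u1 u2 u11 u12 u21 u22"
    using C2_partials_on_subset[OF d] r(2) ball_subset_cball by blast
  have maxB: "u x + \<delta> * gauss_barrier \<gamma> c x \<le> u p + \<delta> * gauss_barrier \<gamma> c p" if "x \<in> ball y r" for x
    using p(2)[of x] that by (simp add: K_def W_def v_def)
  have ell: "a11 p > 0" "(a12 p)\<^sup>2 < a11 p * a22 p" using elliptic[OF \<open>p \<in> U\<close>] by auto
  show False
    by (rule barrier_perturbation_no_max[OF open_ball dB p_in ell L[OF \<open>p \<in> U\<close>] \<gamma>(1) \<gamma>(2)[OF p(1)] \<delta>(1) maxB])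
qed

lemma elliptic_strong_max_local:
  fixes u a11 a12 a22 b1 b2 :: "real \<times> real \<Rightarrow> real"
  assumes U: "open U" and d: "C2_partials_on U u u1 u2 u11 u12 u21 u22"
    and coeffs: "continuous_on U a11" "continuous_on U a12" "continuous_on U a22"
      "continuous_on U b1" "continuous_on U b2"
    and elliptic: "\<And>w. w \<in> U \<Longrightarrow> a11 w > 0 \<and> (a12 w)\<^sup>2 < a11 w * a22 w"
    and L: "\<And>w. w \<in> U \<Longrightarrow>
      a11 w * u11 w + 2 * a12 w * u12 w + a22 w * u22 w + b1 w * u1 w + b2 w * u2 w \<ge> 0"
    and w0: "w0 \<in> U" and max: "\<And>w. w \<in> U \<Longrightarrow> u w \<le> u w0"
  shows "\<exists>r>0. \<forall>w\<in>ball w0 r. u w = u w0"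
proof -
  obtain \<rho> where \<rho>: "\<rho> > 0" "cball w0 \<rho> \<subseteq> U" using U w0 open_contains_cball by blast
  define K where "K = cball w0 \<rho> \<inter> u -` {u w0}"
  have "closed K"
    unfolding K_def using C2_partials_on_continuous(1)[OF d] \<rho>(2)
    by (intro continuous_closed_preimage) (auto elim: continuous_on_subset)
  have "w0 \<in> K" using \<rho>(1) by (simp add: K_def)
  have "u z = u w0" if z: "z \<in> ball w0 (\<rho> / 4)" for z
  proof (rule ccontr)
    assume "u z \<noteq> u w0"
    then have "z \<notin> K" by (simp add: K_def)
    obtain y where y: "y \<in> K" "\<And>k. k \<in> K \<Longrightarrow> dist z y \<le> dist z k"
      using distance_attains_inf[OF \<open>closed K\<close>, of z] \<open>w0 \<in> K\<close> by blast
    \<comment> \<open>The ball about \<open>midpoint z y\<close> through \<open>y\<close> meets the maximum set \<open>K\<close> only at \<open>y\<close>.\<close>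
    define r where "r = dist z y / 4"
    have r: "0 < r" "4 * r < \<rho> / 4"
      using y(1) \<open>z \<notin> K\<close> y(2)[OF \<open>w0 \<in> K\<close>] z by (auto simp: r_def dist_commute)
    have ball_y: "cball y r \<subseteq> cball w0 \<rho>"
    proof
      fix x assume "x \<in> cball y r"
      moreover have "dist w0 x \<le> dist w0 z + dist z y + dist y x"
        using dist_triangle[of w0 x y] dist_triangle[of w0 y z] by linarith
      ultimately show "x \<in> cball w0 \<rho>"
        using y(2)[OF \<open>w0 \<in> K\<close>] z r by (simp add: dist_commute)
    qed
    have max_y: "u w \<le> u y" if "w \<in> U" for w using max[OF that] y(1) by (simp add: K_def)
    have "cball y r \<subseteq> U" using ball_y \<rho>(2) by blast
    moreover have "dist y (midpoint z y) = 2 * r" by (simp add: r_def dist_midpoint)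
    ultimately obtain x where x: "x \<in> sphere y r" "dist (midpoint z y) x \<le> 2 * r" "u x = u y"
      using Hopf_touching_ball[OF U d coeffs elliptic L max_y r(1)] by metis
    have "x \<noteq> y" using x(1) r(1) by auto
    then have "dist z x < dist z y"
      using x(2) by (intro dist_lt_if_in_half_ball) (simp add: r_def)
    moreover have "x \<in> K"
      using x y(1) ball_y sphere_cball by (auto simp: K_def)
    ultimately show False using y(2) by (meson not_less)
  qed
  then show ?thesis using \<rho>(1) by (metis divide_pos_pos zero_less_numeral)
qed

section \<open>Charts of surfaces in \<open>\<real>\<^sup>3\<close>\<close>

lemma has_derivative_partials:
  fixes g :: "real \<times> real \<Rightarrow> 'b::real_normed_vector"
  assumes "g differentiable (at w)"
  shows "(g has_derivative (\<lambda>h. fst h *\<^sub>R frechet_derivative g (at w) (1, 0)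
    + snd h *\<^sub>R frechet_derivative g (at w) (0, 1))) (at w)"
proof -
  have d: "(g has_derivative frechet_derivative g (at w)) (at w)"
    using assms frechet_derivative_works by blast
  have eq: "frechet_derivative g (at w) h
      = fst h *\<^sub>R frechet_derivative g (at w) (1, 0) + snd h *\<^sub>R frechet_derivative g (at w) (0, 1)" for h
  proof -
    have l: "linear (frechet_derivative g (at w))" using has_derivative_linear[OF d] .
    have "h = fst h *\<^sub>R (1, 0) + snd h *\<^sub>R (0, 1)" by (simp add: prod_eq_iff)
    then have "frechet_derivative g (at w) h
        = frechet_derivative g (at w) (fst h *\<^sub>R (1, 0) + snd h *\<^sub>R (0, 1))" by simp
    then show ?thesis by (simp only: linear_add[OF l] linear_cmul[OF l])
  qed
  show ?thesis by (rule has_derivative_eq_rhs[OF d]) (rule ext, rule eq)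
qed

lemma smooth_on_C2_partials:
  fixes X :: "real \<times> real \<Rightarrow> real^3"
  assumes "smooth_on U X"
  shows "C2_partials_on U X (Du X) (Dv X) (Du (Du X)) (Dv (Du X)) (Du (Dv X)) (Dv (Dv X))"
proof -
  have e1: "((1::real), (0::real)) \<in> Basis" and e2: "((0::real), (1::real)) \<in> Basis"
    by (auto simp: Basis_prod_def)
  have C2: "Ck_on (Suc (Suc 0)) U X" using assms by (simp add: smooth_on_def)
  have Du: "Du Y = (\<lambda>x. frechet_derivative Y (at x) (1, 0))"
    and Dv: "Dv Y = (\<lambda>x. frechet_derivative Y (at x) (0, 1))" for Y
    by (simp_all add: fun_eq_iff Du_def Dv_def)
  have diff: "\<forall>x\<in>U. X differentiable (at x)" "\<forall>x\<in>U. Du X differentiable (at x)"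
    "\<forall>x\<in>U. Dv X differentiable (at x)"
    using C2 e1 e2 unfolding Du Dv by auto
  have cont: "continuous_on U (\<lambda>x. frechet_derivative (Du X) (at x) j)"
    "continuous_on U (\<lambda>x. frechet_derivative (Dv X) (at x) j)" if "j \<in> Basis" for j
    using C2 e1 e2 that unfolding Du Dv by auto
  show ?thesis unfolding C2_partials_on_def
  proof (intro conjI ballI)
    fix w assume "w \<in> U"
    then show "(X has_derivative (\<lambda>h. fst h *\<^sub>R Du X w + snd h *\<^sub>R Dv X w)) (at w)"
      "(Du X has_derivative (\<lambda>h. fst h *\<^sub>R Du (Du X) w + snd h *\<^sub>R Dv (Du X) w)) (at w)"
      "(Dv X has_derivative (\<lambda>h. fst h *\<^sub>R Du (Dv X) w + snd h *\<^sub>R Dv (Dv X) w)) (at w)"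
      using diff by (auto simp: Du_def Dv_def intro!: has_derivative_partials)
  next
    show "continuous_on U (Du (Du X))" "continuous_on U (Dv (Du X))"
      "continuous_on U (Du (Dv X))" "continuous_on U (Dv (Dv X))"
      using cont[OF e1] cont[OF e2] by (simp_all add: Du[of "Du X"] Dv[of "Du X"] Du[of "Dv X"] Dv[of "Dv X"])
  qed
qed

lemma gram_det_pos_of_inj_derivative:
  fixes X :: "real \<times> real \<Rightarrow> real^3"
  assumes dX: "(X has_derivative (\<lambda>h. fst h *\<^sub>R A + snd h *\<^sub>R B)) (at w)"
    and inj: "inj (frechet_derivative X (at w))"
  shows "(A \<bullet> A) * (B \<bullet> B) - (A \<bullet> B)\<^sup>2 > 0"
proof -
  have fd: "frechet_derivative X (at w) = (\<lambda>h. fst h *\<^sub>R A + snd h *\<^sub>R B)"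
    using frechet_derivative_at[OF dX] by simp
  have ge: "(A \<bullet> B)\<^sup>2 \<le> (A \<bullet> A) * (B \<bullet> B)"
    using Cauchy_Schwarz_ineq by blast
  show ?thesis
  proof (rule ccontr)
    assume "\<not> ?thesis"
    then have D0: "(A \<bullet> A) * (B \<bullet> B) - (A \<bullet> B)\<^sup>2 = 0" using ge by linarith
    define V where "V = (B \<bullet> B) *\<^sub>R A - (A \<bullet> B) *\<^sub>R B"
    have "V \<bullet> V = (B \<bullet> B) * ((A \<bullet> A) * (B \<bullet> B) - (A \<bullet> B)\<^sup>2)"
      unfolding V_def by (simp add: inner_diff_left inner_diff_right inner_commute power2_eq_square algebra_simps)
    then have "V = 0" using D0 by simp
    then have "frechet_derivative X (at w) (B \<bullet> B, - (A \<bullet> B)) = frechet_derivative X (at w) (0, 0)"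
      unfolding fd V_def by simp
    then have "B \<bullet> B = 0" using inj unfolding inj_def by blast
    then have "B = 0" by simp
    then have "frechet_derivative X (at w) (0, 1) = frechet_derivative X (at w) (0, 0)"
      unfolding fd by simp
    then have "((0::real), (1::real)) = (0, 0)" using inj unfolding inj_def by blast
    then show False by simp
  qed
qed

lemma orthogonal_to_frame_eq_0:
  fixes A B N Z :: "real^3"
  assumes D: "(A \<bullet> A) * (B \<bullet> B) - (A \<bullet> B)\<^sup>2 > 0"
    and N: "N \<bullet> N = 1" "N \<bullet> A = 0" "N \<bullet> B = 0"
    and Z: "Z \<bullet> A = 0" "Z \<bullet> B = 0" "Z \<bullet> N = 0"
  shows "Z = 0"
proof -
  define K where "K = cross3 A B"
  have KK: "K \<bullet> K > 0"
  proof -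
    have "(norm K)\<^sup>2 = (norm A)\<^sup>2 * (norm B)\<^sup>2 - (A \<bullet> B)\<^sup>2" unfolding K_def by (rule norm_cross)
    then show ?thesis using D by (simp add: power2_norm_eq_inner)
  qed
  have colin: "Y = ((K \<bullet> Y) / (K \<bullet> K)) *\<^sub>R K" if "Y \<bullet> A = 0" "Y \<bullet> B = 0" for Y
  proof -
    have "cross3 Y K = (Y \<bullet> B) *\<^sub>R A - (Y \<bullet> A) *\<^sub>R B" unfolding K_def by (rule Lagrange)
    then have "cross3 Y K = 0" using that by simp
    then have "cross3 K Y = 0" by (metis cross_skew neg_equal_0_iff_equal)
    then have "cross3 K (cross3 K Y) = 0" by simp
    moreover have "cross3 K (cross3 K Y) = (K \<bullet> Y) *\<^sub>R K - (K \<bullet> K) *\<^sub>R Y" by (rule Lagrange)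
    ultimately have "(K \<bullet> K) *\<^sub>R Y = (K \<bullet> Y) *\<^sub>R K" by simp
    then have "(1 / (K \<bullet> K)) *\<^sub>R ((K \<bullet> K) *\<^sub>R Y) = (1 / (K \<bullet> K)) *\<^sub>R ((K \<bullet> Y) *\<^sub>R K)" by simp
    then show ?thesis using KK by simp
  qed
  have cZ: "Z = ((K \<bullet> Z) / (K \<bullet> K)) *\<^sub>R K" using colin Z by simp
  have cN: "N = ((K \<bullet> N) / (K \<bullet> K)) *\<^sub>R K" using colin N by simp
  have "N \<bullet> N = ((K \<bullet> N) / (K \<bullet> K)) * ((K \<bullet> N) / (K \<bullet> K)) * (K \<bullet> K)"
    by (subst (1 2) cN) (simp add: inner_commute)
  then have kn: "K \<bullet> N \<noteq> 0" using N(1) by (metis div_0 mult_zero_left zero_neq_one)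
  have "Z \<bullet> N = ((K \<bullet> Z) / (K \<bullet> K)) * ((K \<bullet> N) / (K \<bullet> K)) * (K \<bullet> K)"
    by (subst cZ, subst cN) (simp add: inner_commute)
  then have "K \<bullet> Z = 0" using Z(3) kn KK by simp
  then show ?thesis using cZ by simp
qed

lemma frame_decomposition:
  fixes A B N Y :: "real^3"
  assumes D: "(A \<bullet> A) * (B \<bullet> B) - (A \<bullet> B)\<^sup>2 > 0"
    and N: "N \<bullet> N = 1" "N \<bullet> A = 0" "N \<bullet> B = 0"
  shows "Y = (((B \<bullet> B) * (Y \<bullet> A) - (A \<bullet> B) * (Y \<bullet> B)) / ((A \<bullet> A) * (B \<bullet> B) - (A \<bullet> B)\<^sup>2)) *\<^sub>R A
           + (((A \<bullet> A) * (Y \<bullet> B) - (A \<bullet> B) * (Y \<bullet> A)) / ((A \<bullet> A) * (B \<bullet> B) - (A \<bullet> B)\<^sup>2)) *\<^sub>R B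
           + (N \<bullet> Y) *\<^sub>R N" (is "Y = ?a *\<^sub>R A + ?b *\<^sub>R B + ?c *\<^sub>R N")
proof -
  define Dd where "Dd = (A \<bullet> A) * (B \<bullet> B) - (A \<bullet> B)\<^sup>2"
  have Dd: "Dd \<noteq> 0" using D by (simp add: Dd_def)
  define Z where "Z = Y - (?a *\<^sub>R A + ?b *\<^sub>R B + ?c *\<^sub>R N)"
  have NA: "A \<bullet> N = 0" "B \<bullet> N = 0" using N by (auto simp: inner_commute)
  have BA: "B \<bullet> A = A \<bullet> B" by (rule inner_commute)
  have "Z \<bullet> A = (Y \<bullet> A) - (?a * (A \<bullet> A) + ?b * (A \<bullet> B))"
    unfolding Z_def using N BA by (simp add: inner_diff_left inner_add_left)
  also have "\<dots> = 0" using Dd unfolding Dd_def[symmetric]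
    by (simp add: field_simps power2_eq_square) (simp add: Dd_def power2_eq_square algebra_simps)
  finally have zA: "Z \<bullet> A = 0" .
  have "Z \<bullet> B = (Y \<bullet> B) - (?a * (A \<bullet> B) + ?b * (B \<bullet> B))"
    unfolding Z_def using N by (simp add: inner_diff_left inner_add_left)
  also have "\<dots> = 0" using Dd unfolding Dd_def[symmetric]
    by (simp add: field_simps power2_eq_square) (simp add: Dd_def power2_eq_square algebra_simps)
  finally have zB: "Z \<bullet> B = 0" .
  have YN: "Y \<bullet> N = N \<bullet> Y" by (rule inner_commute)
  have zN: "Z \<bullet> N = 0"
    unfolding Z_def using N NA YN by (simp add: inner_diff_left inner_add_left)
  have "Z = 0" by (rule orthogonal_to_frame_eq_0[OF D N zA zB zN])
  then show ?thesis by (simp add: Z_def)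
qed

text \<open>Writing \<open>X = a X\<^sub>u + b X\<^sub>v + c N\<close>, with \<open>p\<^sub>i\<^sub>j = X\<^sub>i\<^sub>j \<bullet> X\<^sub>u\<close>, \<open>q\<^sub>i\<^sub>j = X\<^sub>i\<^sub>j \<bullet> X\<^sub>v\<close> and
  \<open>e, f, g\<close> the second fundamental form: the tangential parts of the Hessian of \<open>|X|\<^sup>2\<close>
  cancel against the first-order terms.\<close>

lemma lb_sq_norm_algebra:
  fixes a b c E F G p11 q11 e p12 q12 f p22 q22 g D :: real
  assumes D: "D \<noteq> 0" and Dd: "D = E * G - F\<^sup>2"
  shows "(G / D) * (2 * ((a * p11 + b * q11 + c * e) + E))
     + 2 * (- F / D) * (2 * ((a * p12 + b * q12 + c * f) + F))
     + (E / D) * (2 * ((a * p22 + b * q22 + c * g) + G))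
     + (- (G * (G * p11 - 2 * F * p12 + E * p22) - F * (G * q11 - 2 * F * q12 + E * q22)) / D\<^sup>2) * (2 * (a * E + b * F))
     + (- (E * (G * q11 - 2 * F * q12 + E * q22) - F * (G * p11 - 2 * F * p12 + E * p22)) / D\<^sup>2) * (2 * (a * F + b * G))
   = 2 * c * ((e * G - 2 * f * F + g * E) / D) + 4"
proof -
  define P where "P = G * p11 - 2 * F * p12 + E * p22"
  define Q where "Q = G * q11 - 2 * F * q12 + E * q22"
  have t2: "(- (G * P - F * Q)) * (2 * (a * E + b * F)) + (- (E * Q - F * P)) * (2 * (a * F + b * G))
      = -2 * D * (a * P + b * Q)"
    unfolding Dd by (simp add: power2_eq_square algebra_simps)
  have t1: "G * (2 * ((a * p11 + b * q11 + c * e) + E)) + 2 * (- F) * (2 * ((a * p12 + b * q12 + c * f) + F))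
      + E * (2 * ((a * p22 + b * q22 + c * g) + G)) = 2 * (a * P + b * Q) + 2 * c * (e * G - 2 * f * F + g * E) + 4 * D"
    unfolding Dd P_def Q_def by (simp add: power2_eq_square algebra_simps)
  have "(G / D) * (2 * ((a * p11 + b * q11 + c * e) + E))
     + 2 * (- F / D) * (2 * ((a * p12 + b * q12 + c * f) + F))
     + (E / D) * (2 * ((a * p22 + b * q22 + c * g) + G))
     = (2 * (a * P + b * Q) + 2 * c * (e * G - 2 * f * F + g * E) + 4 * D) / D"
    unfolding t1[symmetric] using D by (simp add: field_simps)
  moreover have "(- (G * P - F * Q) / D\<^sup>2) * (2 * (a * E + b * F)) + (- (E * Q - F * P) / D\<^sup>2) * (2 * (a * F + b * G))
      = (-2 * D * (a * P + b * Q)) / D\<^sup>2"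
    unfolding t2[symmetric] by (simp add: add_divide_distrib)
  moreover have "(-2 * D * (a * P + b * Q)) / D\<^sup>2 = (-2 * (a * P + b * Q)) / D"
    using D by (simp add: power2_eq_square field_simps)
  moreover have "(2 * (a * P + b * Q) + 2 * c * (e * G - 2 * f * F + g * E) + 4 * D) / D + (-2 * (a * P + b * Q)) / D
     = (2 * c * (e * G - 2 * f * F + g * E) + 4 * D) / D"
    by (simp add: add_divide_distrib[symmetric])
  moreover have "(2 * c * (e * G - 2 * f * F + g * E) + 4 * D) / D = 2 * c * ((e * G - 2 * f * F + g * E) / D) + 4"
    using D by (simp add: field_simps)
  ultimately show ?thesis unfolding P_def[symmetric] Q_def[symmetric] by (simp only: add.assoc)
qed

definition sq_norm :: "(real \<times> real \<Rightarrow> real^3) \<Rightarrow> real \<times> real \<Rightarrow> real" where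
  "sq_norm X w = X w \<bullet> X w"

definition "sq_norm_u X w = 2 * (Du X w \<bullet> X w)"
definition "sq_norm_v X w = 2 * (Dv X w \<bullet> X w)"
definition "sq_norm_uu X w = 2 * (Du (Du X) w \<bullet> X w + Du X w \<bullet> Du X w)"
definition "sq_norm_uv X w = 2 * (Dv (Du X) w \<bullet> X w + Du X w \<bullet> Dv X w)"
definition "sq_norm_vu X w = 2 * (Du (Dv X) w \<bullet> X w + Dv X w \<bullet> Du X w)"
definition "sq_norm_vv X w = 2 * (Dv (Dv X) w \<bullet> X w + Dv X w \<bullet> Dv X w)"

definition "metric_E X w = Du X w \<bullet> Du X w"
definition "metric_F X w = Du X w \<bullet> Dv X w"
definition "metric_G X w = Dv X w \<bullet> Dv X w"
definition "metric_det X w = metric_E X w * metric_G X w - (metric_F X w)\<^sup>2"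

text \<open>The Laplace-Beltrami operator of the metric induced by \<open>X\<close> is
  \<open>a\<^sup>i\<^sup>j \<partial>\<^sub>i\<partial>\<^sub>j + b\<^sup>k \<partial>\<^sub>k\<close> with \<open>a = g\<^sup>-\<^sup>1\<close> and \<open>b\<^sup>k = - g\<^sup>i\<^sup>j \<Gamma>\<^sup>k\<^sub>i\<^sub>j\<close>;
  \<open>christoffel_u\<close> and \<open>christoffel_v\<close> are \<open>det g\<close> times \<open>g\<^sup>i\<^sup>j X\<^sub>i\<^sub>j \<bullet> X\<^sub>u\<close> and \<open>g\<^sup>i\<^sup>j X\<^sub>i\<^sub>j \<bullet> X\<^sub>v\<close>.\<close>

definition "lb_a11 X w = metric_G X w / metric_det X w"
definition "lb_a12 X w = - metric_F X w / metric_det X w"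
definition "lb_a22 X w = metric_E X w / metric_det X w"
definition "christoffel_u X w = metric_G X w * (Du (Du X) w \<bullet> Du X w)
  - 2 * metric_F X w * (Dv (Du X) w \<bullet> Du X w) + metric_E X w * (Dv (Dv X) w \<bullet> Du X w)"
definition "christoffel_v X w = metric_G X w * (Du (Du X) w \<bullet> Dv X w)
  - 2 * metric_F X w * (Dv (Du X) w \<bullet> Dv X w) + metric_E X w * (Dv (Dv X) w \<bullet> Dv X w)"
definition "lb_b1 X w = - (metric_G X w * christoffel_u X w - metric_F X w * christoffel_v X w) / (metric_det X w)\<^sup>2"
definition "lb_b2 X w = - (metric_E X w * christoffel_v X w - metric_F X w * christoffel_u X w) / (metric_det X w)\<^sup>2"

text \<open>Drift of \<open>u \<mapsto> \<Delta>u - |\<nabla>u|\<^sup>2 / u\<close> with the gradient factor frozen at \<open>u = |X|\<^sup>2\<close>; for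
  \<open>u = |X|\<^sup>2\<close> this is \<open>u \<Delta> log u\<close>.\<close>

definition "log_b1 X w = lb_b1 X w - (lb_a11 X w * sq_norm_u X w + lb_a12 X w * sq_norm_v X w) / sq_norm X w"
definition "log_b2 X w = lb_b2 X w - (lb_a12 X w * sq_norm_u X w + lb_a22 X w * sq_norm_v X w) / sq_norm X w"

lemma lb_sq_norm_eq_mean_curv:
  fixes X :: "real \<times> real \<Rightarrow> real^3" and N :: "real^3"
  assumes D: "metric_det X w > 0"
    and N: "N \<bullet> N = 1" "N \<bullet> Du X w = 0" "N \<bullet> Dv X w = 0"
  shows "lb_a11 X w * sq_norm_uu X w + 2 * lb_a12 X w * sq_norm_uv X w + lb_a22 X w * sq_norm_vv X w
      + lb_b1 X w * sq_norm_u X w + lb_b2 X w * sq_norm_v X w = 2 * (N \<bullet> X w) * mean_curv X N w + 4"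
proof -
  define X1 where "X1 = Du X w"
  define X2 where "X2 = Dv X w"
  define X11 where "X11 = Du (Du X) w"
  define X12 where "X12 = Dv (Du X) w"
  define X22 where "X22 = Dv (Dv X) w"
  define Y where "Y = X w"
  define E where "E = X1 \<bullet> X1"
  define F where "F = X1 \<bullet> X2"
  define G where "G = X2 \<bullet> X2"
  define Dd where "Dd = E * G - F\<^sup>2"
  have Dpos: "Dd > 0" using D by (simp add: Dd_def metric_det_def metric_E_def metric_F_def metric_G_def E_def F_def G_def X1_def X2_def)
  have D': "(X1 \<bullet> X1) * (X2 \<bullet> X2) - (X1 \<bullet> X2)\<^sup>2 > 0" using Dpos by (simp add: Dd_def E_def F_def G_def)
  have N': "N \<bullet> N = 1" "N \<bullet> X1 = 0" "N \<bullet> X2 = 0" using N by (auto simp: X1_def X2_def)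
  define a where "a = ((X2 \<bullet> X2) * (Y \<bullet> X1) - (X1 \<bullet> X2) * (Y \<bullet> X2)) / ((X1 \<bullet> X1) * (X2 \<bullet> X2) - (X1 \<bullet> X2)\<^sup>2)"
  define b where "b = ((X1 \<bullet> X1) * (Y \<bullet> X2) - (X1 \<bullet> X2) * (Y \<bullet> X1)) / ((X1 \<bullet> X1) * (X2 \<bullet> X2) - (X1 \<bullet> X2)\<^sup>2)"
  define c where "c = N \<bullet> Y"
  have xs: "Y = a *\<^sub>R X1 + b *\<^sub>R X2 + c *\<^sub>R N"
    unfolding a_def b_def c_def by (rule frame_decomposition[OF D' N'])
  have X1N: "X1 \<bullet> N = 0" "X2 \<bullet> N = 0" using N' by (auto simp: inner_commute)
  have ip: "V \<bullet> Y = a * (V \<bullet> X1) + b * (V \<bullet> X2) + c * (V \<bullet> N)" for V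
    by (subst xs) (simp add: inner_add_right)
  have y1: "X1 \<bullet> Y = a * E + b * F" using ip[of X1] X1N by (simp add: E_def F_def)
  have y2: "X2 \<bullet> Y = a * F + b * G" using ip[of X2] X1N by (simp add: F_def G_def inner_commute)
  have H: "mean_curv X N w = (((X11 \<bullet> N) * G - 2 * (X12 \<bullet> N) * F + (X22 \<bullet> N) * E) / Dd)"
    by (simp add: mean_curv_def Let_def X1_def X2_def X11_def X12_def X22_def E_def F_def G_def Dd_def inner_commute)
  have k: "(G / Dd) * (2 * ((a * (X11 \<bullet> X1) + b * (X11 \<bullet> X2) + c * (X11 \<bullet> N)) + E))
   + 2 * (- F / Dd) * (2 * ((a * (X12 \<bullet> X1) + b * (X12 \<bullet> X2) + c * (X12 \<bullet> N)) + F))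
   + (E / Dd) * (2 * ((a * (X22 \<bullet> X1) + b * (X22 \<bullet> X2) + c * (X22 \<bullet> N)) + G))
   + (- (G * (G * (X11 \<bullet> X1) - 2 * F * (X12 \<bullet> X1) + E * (X22 \<bullet> X1)) - F * (G * (X11 \<bullet> X2) - 2 * F * (X12 \<bullet> X2) + E * (X22 \<bullet> X2))) / Dd\<^sup>2) * (2 * (a * E + b * F))
   + (- (E * (G * (X11 \<bullet> X2) - 2 * F * (X12 \<bullet> X2) + E * (X22 \<bullet> X2)) - F * (G * (X11 \<bullet> X1) - 2 * F * (X12 \<bullet> X1) + E * (X22 \<bullet> X1))) / Dd\<^sup>2) * (2 * (a * F + b * G))
   = 2 * c * (((X11 \<bullet> N) * G - 2 * (X12 \<bullet> N) * F + (X22 \<bullet> N) * E) / Dd) + 4"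
    by (rule lb_sq_norm_algebra) (use Dpos in \<open>auto simp: Dd_def\<close>)
  have e1: "sq_norm_uu X w = 2 * ((a * (X11 \<bullet> X1) + b * (X11 \<bullet> X2) + c * (X11 \<bullet> N)) + E)"
    using ip[of X11] by (simp add: sq_norm_uu_def X11_def X1_def Y_def E_def)
  have e2: "sq_norm_uv X w = 2 * ((a * (X12 \<bullet> X1) + b * (X12 \<bullet> X2) + c * (X12 \<bullet> N)) + F)"
    using ip[of X12] by (simp add: sq_norm_uv_def X12_def X1_def X2_def Y_def F_def)
  have e3: "sq_norm_vv X w = 2 * ((a * (X22 \<bullet> X1) + b * (X22 \<bullet> X2) + c * (X22 \<bullet> N)) + G)"
    using ip[of X22] by (simp add: sq_norm_vv_def X22_def X2_def Y_def G_def)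
  have e4: "sq_norm_u X w = 2 * (a * E + b * F)" using y1 by (simp add: sq_norm_u_def X1_def Y_def)
  have e5: "sq_norm_v X w = 2 * (a * F + b * G)" using y2 by (simp add: sq_norm_v_def X2_def Y_def)
  have e6: "lb_a11 X w = G / Dd" "lb_a12 X w = - F / Dd" "lb_a22 X w = E / Dd"
    by (simp_all add: lb_a11_def lb_a12_def lb_a22_def metric_det_def metric_E_def metric_F_def metric_G_def
        Dd_def E_def F_def G_def X1_def X2_def)
  have e7: "lb_b1 X w = - (G * (G * (X11 \<bullet> X1) - 2 * F * (X12 \<bullet> X1) + E * (X22 \<bullet> X1)) - F * (G * (X11 \<bullet> X2) - 2 * F * (X12 \<bullet> X2) + E * (X22 \<bullet> X2))) / Dd\<^sup>2"
    "lb_b2 X w = - (E * (G * (X11 \<bullet> X2) - 2 * F * (X12 \<bullet> X2) + E * (X22 \<bullet> X2)) - F * (G * (X11 \<bullet> X1) - 2 * F * (X12 \<bullet> X1) + E * (X22 \<bullet> X1))) / Dd\<^sup>2"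
    by (simp_all add: lb_b1_def lb_b2_def christoffel_u_def christoffel_v_def metric_det_def metric_E_def
        metric_F_def metric_G_def Dd_def E_def F_def G_def X1_def X2_def X11_def X12_def X22_def)
  show ?thesis unfolding e1 e2 e3 e4 e5 e6 e7 H using k by (simp add: c_def Y_def)
qed

lemma grad_sq_norm_eq:
  fixes X :: "real \<times> real \<Rightarrow> real^3" and N :: "real^3"
  assumes D: "metric_det X w > 0"
    and N: "N \<bullet> N = 1" "N \<bullet> Du X w = 0" "N \<bullet> Dv X w = 0"
  shows "sq_norm_u X w * (lb_a11 X w * sq_norm_u X w + lb_a12 X w * sq_norm_v X w)
      + sq_norm_v X w * (lb_a12 X w * sq_norm_u X w + lb_a22 X w * sq_norm_v X w)
    = 4 * (sq_norm X w - (N \<bullet> X w)\<^sup>2)"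
proof -
  define E F G where "E = metric_E X w" and "F = metric_F X w" and "G = metric_G X w"
  have DEFG: "metric_det X w = E * G - F\<^sup>2" by (simp add: metric_det_def E_def F_def G_def)
  let ?X1 = "Du X w" and ?X2 = "Dv X w" and ?Y = "X w" and ?c = "N \<bullet> X w"
  define a where "a = (G * (?Y \<bullet> ?X1) - F * (?Y \<bullet> ?X2)) / (E * G - F\<^sup>2)"
  define b where "b = (E * (?Y \<bullet> ?X2) - F * (?Y \<bullet> ?X1)) / (E * G - F\<^sup>2)"
  have xs: "?Y = a *\<^sub>R ?X1 + b *\<^sub>R ?X2 + ?c *\<^sub>R N"
    using frame_decomposition[of ?X1 ?X2 N ?Y] D N
    by (simp add: a_def b_def E_def F_def G_def metric_det_def metric_E_def metric_F_def metric_G_def inner_commute)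
  have ip: "V \<bullet> ?Y = a * (V \<bullet> ?X1) + b * (V \<bullet> ?X2) + ?c * (V \<bullet> N)" for V
    by (subst xs) (simp add: inner_add_right)
  have s1: "sq_norm_u X w = 2 * (a * E + b * F)" and s2: "sq_norm_v X w = 2 * (a * F + b * G)"
    using ip[of ?X1] ip[of ?X2] N
    by (simp_all add: sq_norm_u_def sq_norm_v_def E_def F_def G_def metric_E_def metric_F_def metric_G_def inner_commute)
  have sq: "sq_norm X w = a\<^sup>2 * E + 2 * a * b * F + b\<^sup>2 * G + ?c\<^sup>2"
  proof -
    have "sq_norm X w = a * (?X1 \<bullet> ?Y) + b * (?X2 \<bullet> ?Y) + ?c * (N \<bullet> ?Y)"
      unfolding sq_norm_def by (subst (1) xs) (simp add: inner_add_left)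
    also have "\<dots> = a\<^sup>2 * E + 2 * a * b * F + b\<^sup>2 * G + ?c\<^sup>2"
      using ip[of ?X1] ip[of ?X2] N
      by (simp add: E_def F_def G_def metric_E_def metric_F_def metric_G_def inner_commute power2_eq_square algebra_simps)
    finally show ?thesis .
  qed
  define Dg where "Dg = E * G - F\<^sup>2"
  have Dg: "Dg \<noteq> 0" using D DEFG by (simp add: Dg_def)
  have "s * (G / Dg * s + - F / Dg * t) + t * (- F / Dg * s + E / Dg * t)
      = ((G * s - F * t) * s + (E * t - F * s) * t) / Dg" for s t
    using Dg by (simp add: field_simps)
  moreover have "(G * s - F * t) * s + (E * t - F * s) * t = 4 * Dg * (a\<^sup>2 * E + 2 * a * b * F + b\<^sup>2 * G)"
    if "s = 2 * (a * E + b * F)" "t = 2 * (a * F + b * G)" for s t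
    unfolding that Dg_def by (simp add: power2_eq_square algebra_simps)
  ultimately show ?thesis
    unfolding s1 s2 sq lb_a11_def lb_a12_def lb_a22_def DEFG E_def[symmetric] F_def[symmetric]
      G_def[symmetric] Dg_def[symmetric]
    using Dg by simp
qed

lemma normal_sq_eq_sq_norm_at_critical:
  fixes X :: "real \<times> real \<Rightarrow> real^3" and N :: "real^3"
  assumes "metric_det X w > 0" "N \<bullet> N = 1" "N \<bullet> Du X w = 0" "N \<bullet> Dv X w = 0"
    and "sq_norm_u X w = 0" "sq_norm_v X w = 0"
  shows "(N \<bullet> X w)\<^sup>2 = sq_norm X w"
  using grad_sq_norm_eq[OF assms(1-4)] assms(5,6) by simp

lemma log_op_sq_norm_eq_0:
  fixes X :: "real \<times> real \<Rightarrow> real^3" and N :: "real^3"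
  assumes D: "metric_det X w > 0" and N: "N \<bullet> N = 1" "N \<bullet> Du X w = 0" "N \<bullet> Dv X w = 0"
    and nz: "X w \<noteq> 0" and H: "mean_curv X N w = -2 * (N \<bullet> X w) / (norm (X w))\<^sup>2"
  shows "lb_a11 X w * sq_norm_uu X w + 2 * lb_a12 X w * sq_norm_uv X w + lb_a22 X w * sq_norm_vv X w
      + log_b1 X w * sq_norm_u X w + log_b2 X w * sq_norm_v X w = 0"
proof -
  have sq: "sq_norm X w > 0" "(norm (X w))\<^sup>2 = sq_norm X w"
    using nz by (simp_all add: sq_norm_def power2_norm_eq_inner)
  have "lb_a11 X w * sq_norm_uu X w + 2 * lb_a12 X w * sq_norm_uv X w + lb_a22 X w * sq_norm_vv X w
      + log_b1 X w * sq_norm_u X w + log_b2 X w * sq_norm_v X w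
    = (lb_a11 X w * sq_norm_uu X w + 2 * lb_a12 X w * sq_norm_uv X w + lb_a22 X w * sq_norm_vv X w
      + lb_b1 X w * sq_norm_u X w + lb_b2 X w * sq_norm_v X w)
      - (sq_norm_u X w * (lb_a11 X w * sq_norm_u X w + lb_a12 X w * sq_norm_v X w)
        + sq_norm_v X w * (lb_a12 X w * sq_norm_u X w + lb_a22 X w * sq_norm_v X w)) / sq_norm X w"
    by (simp add: log_b1_def log_b2_def algebra_simps add_divide_distrib diff_divide_distrib)
  also have "\<dots> = 2 * (N \<bullet> X w) * (-2 * (N \<bullet> X w) / sq_norm X w) + 4
      - 4 * (sq_norm X w - (N \<bullet> X w)\<^sup>2) / sq_norm X w"
    unfolding lb_sq_norm_eq_mean_curv[OF D N] grad_sq_norm_eq[OF D N] H sq(2) ..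
  also have "\<dots> = 0" using sq(1) by (simp add: field_simps power2_eq_square)
  finally show ?thesis .
qed

lemma C2_partials_on_inner_self:
  fixes X X1 X2 X11 X12 X21 X22 :: "real \<times> real \<Rightarrow> 'a::real_inner"
  assumes d: "C2_partials_on U X X1 X2 X11 X12 X21 X22"
  shows "C2_partials_on U (\<lambda>w. X w \<bullet> X w) (\<lambda>w. 2 * (X1 w \<bullet> X w)) (\<lambda>w. 2 * (X2 w \<bullet> X w))
     (\<lambda>w. 2 * (X11 w \<bullet> X w + X1 w \<bullet> X1 w)) (\<lambda>w. 2 * (X12 w \<bullet> X w + X1 w \<bullet> X2 w))
     (\<lambda>w. 2 * (X21 w \<bullet> X w + X2 w \<bullet> X1 w)) (\<lambda>w. 2 * (X22 w \<bullet> X w + X2 w \<bullet> X2 w))"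
  unfolding C2_partials_on_def
proof (intro conjI ballI)
  fix w assume w: "w \<in> U"
  have dX: "(X has_derivative (\<lambda>h. fst h *\<^sub>R X1 w + snd h *\<^sub>R X2 w)) (at w)"
    and dX1: "(X1 has_derivative (\<lambda>h. fst h *\<^sub>R X11 w + snd h *\<^sub>R X12 w)) (at w)"
    and dX2: "(X2 has_derivative (\<lambda>h. fst h *\<^sub>R X21 w + snd h *\<^sub>R X22 w)) (at w)"
    using d w by (auto simp: C2_partials_on_def)
  show "((\<lambda>w. X w \<bullet> X w) has_derivative (\<lambda>h. fst h *\<^sub>R (2 * (X1 w \<bullet> X w)) + snd h *\<^sub>R (2 * (X2 w \<bullet> X w)))) (at w)"
    by (rule has_derivative_eq_rhs[OF has_derivative_inner[OF dX dX]])
       (auto simp: fun_eq_iff inner_add_left inner_add_right inner_commute algebra_simps)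
  show "((\<lambda>w. 2 * (X1 w \<bullet> X w)) has_derivative (\<lambda>h. fst h *\<^sub>R (2 * (X11 w \<bullet> X w + X1 w \<bullet> X1 w)) + snd h *\<^sub>R (2 * (X12 w \<bullet> X w + X1 w \<bullet> X2 w)))) (at w)"
    by (rule has_derivative_eq_rhs[OF has_derivative_mult_right[OF has_derivative_inner[OF dX1 dX]]])
       (auto simp: fun_eq_iff inner_add_left inner_add_right inner_commute algebra_simps)
  show "((\<lambda>w. 2 * (X2 w \<bullet> X w)) has_derivative (\<lambda>h. fst h *\<^sub>R (2 * (X21 w \<bullet> X w + X2 w \<bullet> X1 w)) + snd h *\<^sub>R (2 * (X22 w \<bullet> X w + X2 w \<bullet> X2 w)))) (at w)"
    by (rule has_derivative_eq_rhs[OF has_derivative_mult_right[OF has_derivative_inner[OF dX2 dX]]])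
       (auto simp: fun_eq_iff inner_add_left inner_add_right inner_commute algebra_simps)
qed (use d C2_partials_on_continuous[OF d] in \<open>auto simp: C2_partials_on_def intro!: continuous_intros\<close>)

lemma C2_partials_on_sq_norm:
  assumes "smooth_on U X"
  shows "C2_partials_on U (sq_norm X) (sq_norm_u X) (sq_norm_v X)
    (sq_norm_uu X) (sq_norm_uv X) (sq_norm_vu X) (sq_norm_vv X)"
  using C2_partials_on_inner_self[OF smooth_on_C2_partials[OF assms]]
  unfolding sq_norm_def[abs_def] sq_norm_u_def[abs_def] sq_norm_v_def[abs_def] sq_norm_uu_def[abs_def]
    sq_norm_uv_def[abs_def] sq_norm_vu_def[abs_def] sq_norm_vv_def[abs_def] .

lemma metric_det_pos:
  assumes "smooth_on U X" "w \<in> U" "inj (frechet_derivative X (at w))"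
  shows "metric_det X w > 0"
proof -
  have "(X has_derivative (\<lambda>h. fst h *\<^sub>R Du X w + snd h *\<^sub>R Dv X w)) (at w)"
    using smooth_on_C2_partials[OF assms(1)] assms(2) by (simp add: C2_partials_on_def)
  from gram_det_pos_of_inj_derivative[OF this assms(3)] show ?thesis
    by (simp add: metric_det_def metric_E_def metric_F_def metric_G_def)
qed

lemma lb_elliptic:
  assumes D: "metric_det X w > 0"
  shows "lb_a11 X w > 0 \<and> (lb_a12 X w)\<^sup>2 < lb_a11 X w * lb_a22 X w"
proof -
  have EG: "metric_E X w \<ge> 0" "metric_G X w \<ge> 0" by (simp_all add: metric_E_def metric_G_def)
  have "metric_E X w * metric_G X w > 0"
    using D by (simp add: metric_det_def) (smt (verit) zero_le_power2)
  then have G: "metric_G X w > 0" using EG by (simp add: zero_less_mult_iff)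
  have "(lb_a12 X w)\<^sup>2 = (metric_F X w)\<^sup>2 / (metric_det X w)\<^sup>2" by (simp add: lb_a12_def power_divide)
  also have "\<dots> < (metric_E X w * metric_G X w) / (metric_det X w)\<^sup>2"
    using D by (intro divide_strict_right_mono) (auto simp: metric_det_def)
  also have "\<dots> = lb_a11 X w * lb_a22 X w" by (simp add: lb_a11_def lb_a22_def power2_eq_square)
  finally show ?thesis using G D by (simp add: lb_a11_def)
qed

lemma continuous_on_lb_coeffs:
  assumes sm: "smooth_on U X" and D: "\<And>w. w \<in> U \<Longrightarrow> metric_det X w > 0"
    and nz: "\<And>w. w \<in> U \<Longrightarrow> X w \<noteq> 0"
  shows "continuous_on U (lb_a11 X)" "continuous_on U (lb_a12 X)" "continuous_on U (lb_a22 X)"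
    "continuous_on U (log_b1 X)" "continuous_on U (log_b2 X)"
proof -
  have dX: "C2_partials_on U X (Du X) (Dv X) (Du (Du X)) (Dv (Du X)) (Du (Dv X)) (Dv (Dv X))"
    by (rule smooth_on_C2_partials[OF sm])
  have c: "continuous_on U X" "continuous_on U (Du X)" "continuous_on U (Dv X)"
    "continuous_on U (Du (Du X))" "continuous_on U (Dv (Du X))" "continuous_on U (Dv (Dv X))"
    using C2_partials_on_continuous[OF dX] dX by (auto simp: C2_partials_on_def)
  have nz': "\<forall>w\<in>U. metric_det X w \<noteq> 0" "\<forall>w\<in>U. sq_norm X w \<noteq> 0"
    using D nz by (force simp: sq_norm_def)+
  note defs = lb_a11_def[abs_def] lb_a12_def[abs_def] lb_a22_def[abs_def] log_b1_def[abs_def]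
    log_b2_def[abs_def] lb_b1_def[abs_def] lb_b2_def[abs_def] christoffel_u_def[abs_def]
    christoffel_v_def[abs_def] metric_det_def[abs_def] metric_E_def[abs_def] metric_F_def[abs_def]
    metric_G_def[abs_def] sq_norm_def[abs_def] sq_norm_u_def[abs_def] sq_norm_v_def[abs_def]
  show "continuous_on U (lb_a11 X)" "continuous_on U (lb_a12 X)" "continuous_on U (lb_a22 X)"
    "continuous_on U (log_b1 X)" "continuous_on U (log_b2 X)"
    using c nz' unfolding defs by (auto intro!: continuous_intros simp: metric_det_def[symmetric])
qed

lemma eq_of_orthogonal_difference_same_norm:
  fixes A B N x y :: "real^3"
  assumes D: "(A \<bullet> A) * (B \<bullet> B) - (A \<bullet> B)\<^sup>2 > 0"
    and N: "N \<bullet> N = 1" "N \<bullet> A = 0" "N \<bullet> B = 0"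
    and diff: "(y - x) \<bullet> A = 0" "(y - x) \<bullet> B = 0"
    and norm: "y \<bullet> y = x \<bullet> x" and side: "(N \<bullet> y) * (N \<bullet> x) > 0"
  shows "y = x"
proof -
  define t where "t = N \<bullet> (y - x)"
  have y: "y = x + t *\<^sub>R N"
    using frame_decomposition[OF D N, of "y - x"] diff by (simp add: t_def inner_commute algebra_simps)
  then have "t * (2 * (N \<bullet> x) + t) = 0"
    using norm N(1) by (simp add: inner_add_left inner_add_right inner_commute algebra_simps)
  moreover have "t \<noteq> - 2 * (N \<bullet> x)"
  proof
    assume "t = - 2 * (N \<bullet> x)"
    then have "N \<bullet> y = - (N \<bullet> x)" using y N(1) by (simp add: inner_add_right inner_diff_right)
    then show False using side by (simp add: mult_less_0_iff)
  qed
  ultimately have "t = 0" by auto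
  then show ?thesis using y by simp
qed

definition blinfun_mat2 :: "real \<Rightarrow> real \<Rightarrow> real \<Rightarrow> real \<Rightarrow> (real \<times> real) \<Rightarrow>\<^sub>L (real \<times> real)" where
  "blinfun_mat2 a b c d = Blinfun (\<lambda>h. (a * fst h + b * snd h, c * fst h + d * snd h))"

lemma blinfun_mat2_apply:
  "blinfun_apply (blinfun_mat2 a b c d) h = (a * fst h + b * snd h, c * fst h + d * snd h)"
proof -
  have "bounded_linear (\<lambda>h::real \<times> real. (a * fst h + b * snd h, c * fst h + d * snd h))"
    by (auto intro!: bounded_linear_intros)
  then show ?thesis by (simp add: blinfun_mat2_def bounded_linear_Blinfun_apply)
qed

lemma continuous_on_blinfun_mat2:
  assumes "continuous_on U a" "continuous_on U b" "continuous_on U c" "continuous_on U d"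
  shows "continuous_on U (\<lambda>w. blinfun_mat2 (a w) (b w) (c w) (d w))"
proof -
  have decomp: "blinfun_mat2 a' b' c' d' = a' *\<^sub>R blinfun_mat2 1 0 0 0 + b' *\<^sub>R blinfun_mat2 0 1 0 0
      + c' *\<^sub>R blinfun_mat2 0 0 1 0 + d' *\<^sub>R blinfun_mat2 0 0 0 1" for a' b' c' d'
    by (rule blinfun_eqI) (simp add: blinfun_mat2_apply blinfun.add_left blinfun.scaleR_left)
  show ?thesis using assms by (subst decomp) (intro continuous_intros)
qed

lemma tangent_projection_open_map:
  fixes X :: "real \<times> real \<Rightarrow> real^3"
  assumes U: "open U" and sm: "smooth_on U X" and w0: "w0 \<in> U" and D: "metric_det X w0 > 0"
  obtains U' where "open U'" "w0 \<in> U'" "U' \<subseteq> U"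
    "\<And>W. open W \<Longrightarrow> W \<subseteq> U' \<Longrightarrow> open ((\<lambda>w. (X w \<bullet> Du X w0, X w \<bullet> Dv X w0)) ` W)"
proof -
  define A B where "A = Du X w0" and "B = Dv X w0"
  define F where "F w = (X w \<bullet> A, X w \<bullet> B)" for w
  define F' where "F' w = blinfun_mat2 (Du X w \<bullet> A) (Dv X w \<bullet> A) (Du X w \<bullet> B) (Dv X w \<bullet> B)" for w
  have dX: "C2_partials_on U X (Du X) (Dv X) (Du (Du X)) (Dv (Du X)) (Du (Dv X)) (Dv (Dv X))"
    by (rule smooth_on_C2_partials[OF sm])
  have "(F has_derivative blinfun_apply (F' w)) (at w)" if "w \<in> U" for w
  proof -
    have "(X has_derivative (\<lambda>h. fst h *\<^sub>R Du X w + snd h *\<^sub>R Dv X w)) (at w)"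
      using dX that by (simp add: C2_partials_on_def)
    then have "(F has_derivative (\<lambda>h. (X w \<bullet> 0 + (fst h *\<^sub>R Du X w + snd h *\<^sub>R Dv X w) \<bullet> A,
        X w \<bullet> 0 + (fst h *\<^sub>R Du X w + snd h *\<^sub>R Dv X w) \<bullet> B))) (at w)"
      unfolding F_def by (intro has_derivative_Pair has_derivative_inner has_derivative_const)
    then show ?thesis
      by (rule has_derivative_eq_rhs) (auto simp: F'_def blinfun_mat2_apply fun_eq_iff inner_add_left)
  qed
  moreover have "continuous_on U F'"
    using C2_partials_on_continuous[OF dX] unfolding F'_def
    by (intro continuous_on_blinfun_mat2 continuous_intros) auto
  moreover
  define E F0 G where "E = A \<bullet> A" and "F0 = A \<bullet> B" and "G = B \<bullet> B"
  define Dt where "Dt = E * G - F0\<^sup>2"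
  have "Dt \<noteq> 0"
    using D by (simp add: Dt_def E_def F0_def G_def A_def B_def metric_det_def metric_E_def metric_F_def metric_G_def)
  then have "blinfun_mat2 (G / Dt) (- F0 / Dt) (- F0 / Dt) (E / Dt) o\<^sub>L F' w0 = id_blinfun"
  proof (intro blinfun_eqI)
    fix h :: "real \<times> real"
    assume Dt: "Dt \<noteq> 0"
    have "G / Dt * (E * fst h + F0 * snd h) + - F0 / Dt * (F0 * fst h + G * snd h) = fst h"
      "- F0 / Dt * (E * fst h + F0 * snd h) + E / Dt * (F0 * fst h + G * snd h) = snd h"
      using Dt by (simp_all add: field_simps) (simp_all add: Dt_def power2_eq_square algebra_simps)
    then show "blinfun_apply (blinfun_mat2 (G / Dt) (- F0 / Dt) (- F0 / Dt) (E / Dt) o\<^sub>L F' w0) h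
        = blinfun_apply id_blinfun h"
      by (simp add: F'_def blinfun_mat2_apply prod_eq_iff E_def F0_def G_def A_def B_def inner_commute)
  qed
  ultimately obtain U' V g where U': "open U'" "U' \<subseteq> U" "w0 \<in> U'" and "open V"
    and hom: "homeomorphism U' V F g"
    by (rule inverse_function_theorem[OF U _ _ w0]) blast+
  show thesis
  proof (rule that[OF U'(1,3,2)])
    fix W assume W: "open W" "W \<subseteq> U'"
    then have "openin (top_of_set V) (F ` W)"
      by (intro homeomorphism_imp_open_map[OF hom]) (simp add: open_subset)
    then show "open ((\<lambda>w. (X w \<bullet> Du X w0, X w \<bullet> Dv X w0)) ` W)"
      using \<open>open V\<close> openin_open_trans by (auto simp: F_def A_def B_def)
  qed
qed

lemma sphere_locally_in_image:
  fixes X :: "real \<times> real \<Rightarrow> real^3"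
  assumes U: "open U" and sm: "smooth_on U X" and w0: "w0 \<in> U" and D: "metric_det X w0 > 0"
    and sph: "\<And>w. w \<in> U \<Longrightarrow> norm (X w) = R" and R: "R > 0"
  obtains \<epsilon> where "\<epsilon> > 0" "\<And>y. y \<in> sphere 0 R \<Longrightarrow> dist y (X w0) < \<epsilon> \<Longrightarrow> y \<in> X ` U"
proof -
  define A B q0 where "A = Du X w0" and "B = Dv X w0" and "q0 = X w0"
  define N where "N = (1 / R) *\<^sub>R q0"
  have sq_max: "sq_norm X w \<le> sq_norm X w0" if "w \<in> U" for w
    using sph[OF that] sph[OF w0] by (simp add: sq_norm_def power2_norm_eq_inner[symmetric])
  have "q0 \<bullet> A = 0" "q0 \<bullet> B = 0"
    using C2_partials_on_interior_max(1,2)[OF U C2_partials_on_sq_norm[OF sm] w0 sq_max]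
    by (auto simp: sq_norm_u_def sq_norm_v_def q0_def A_def B_def inner_commute)
  moreover have "q0 \<bullet> q0 = R\<^sup>2" using sph[OF w0] by (simp add: q0_def dot_square_norm)
  ultimately have N: "N \<bullet> N = 1" "N \<bullet> A = 0" "N \<bullet> B = 0"
    using R by (simp_all add: N_def power2_eq_square)
  have frame: "(A \<bullet> A) * (B \<bullet> B) - (A \<bullet> B)\<^sup>2 > 0"
    using D by (simp add: A_def B_def metric_det_def metric_E_def metric_F_def metric_G_def)
  obtain U' where U': "open U'" "w0 \<in> U'" "U' \<subseteq> U"
    and open_image: "\<And>W. open W \<Longrightarrow> W \<subseteq> U' \<Longrightarrow> open ((\<lambda>w. (X w \<bullet> A, X w \<bullet> B)) ` W)"
    using tangent_projection_open_map[OF U sm w0 D] unfolding A_def B_def by blast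
  define W where "W = U' \<inter> X -` {y. q0 \<bullet> y > 0}"
  have "continuous_on U' X"
    using C2_partials_on_continuous(1)[OF smooth_on_C2_partials[OF sm]] U'(3) by (rule continuous_on_subset)
  then have "open W" unfolding W_def using U'(1) open_halfspace_gt by (rule continuous_open_preimage)
  define Ob where "Ob = (\<lambda>y. (y \<bullet> A, y \<bullet> B)) -` ((\<lambda>w. (X w \<bullet> A, X w \<bullet> B)) ` W) \<inter> {y. q0 \<bullet> y > 0}"
  have "open Ob" unfolding Ob_def
    using open_image[OF \<open>open W\<close>] by (intro open_Int open_vimage open_halfspace_gt continuous_intros) (auto simp: W_def)
  moreover have "q0 \<in> Ob" using U'(2) R \<open>q0 \<bullet> q0 = R\<^sup>2\<close> by (auto simp: Ob_def W_def q0_def)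
  ultimately obtain \<epsilon> where \<epsilon>: "\<epsilon> > 0" "ball q0 \<epsilon> \<subseteq> Ob" using open_contains_ball by blast
  show thesis
  proof (rule that[OF \<epsilon>(1)])
    fix y assume y: "y \<in> sphere 0 R" "dist y (X w0) < \<epsilon>"
    then have "y \<in> Ob" using \<epsilon>(2) by (auto simp: q0_def dist_commute)
    then obtain w where w: "w \<in> W" "y \<bullet> A = X w \<bullet> A" "y \<bullet> B = X w \<bullet> B" and "q0 \<bullet> y > 0"
      by (auto simp: Ob_def)
    have "w \<in> U" using w(1) U'(3) by (auto simp: W_def)
    have "y = X w"
    proof (rule eq_of_orthogonal_difference_same_norm[OF frame N])
      show "(y - X w) \<bullet> A = 0" "(y - X w) \<bullet> B = 0" using w(2,3) by (simp_all add: inner_diff_left)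
      show "y \<bullet> y = X w \<bullet> X w" using y(1) sph[OF \<open>w \<in> U\<close>] by (simp add: dot_square_norm)
      show "(N \<bullet> y) * (N \<bullet> X w) > 0"
        using \<open>q0 \<bullet> y > 0\<close> w(1) R by (simp add: N_def W_def)
    qed
    then show "y \<in> X ` U" using \<open>w \<in> U\<close> by blast
  qed
qed

section \<open>Closed \<open>\<alpha>\<close>-stationary surfaces\<close>

locale alpha_stationary_surface =
  fixes \<alpha> :: real and M :: "'m topology"
    and A :: "((real \<times> real) set \<times> (real \<times> real \<Rightarrow> 'm)) set"
    and f \<nu> :: "'m \<Rightarrow> real^3"
  assumes stationary: "alpha_stationary \<alpha> M A f \<nu>"
begin

lemma chart_open: "(U, \<phi>) \<in> A \<Longrightarrow> open U"
  and chart_openin: "(U, \<phi>) \<in> A \<Longrightarrow> openin M (\<phi> ` U)"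
  and chart_homeomorphic: "(U, \<phi>) \<in> A \<Longrightarrow> homeomorphic_map (top_of_set U) (subtopology M (\<phi> ` U)) \<phi>"
  and chart_smooth: "(U, \<phi>) \<in> A \<Longrightarrow> smooth_on U (f \<circ> \<phi>)"
  and chart_inj: "(U, \<phi>) \<in> A \<Longrightarrow> w \<in> U \<Longrightarrow> inj (frechet_derivative (f \<circ> \<phi>) (at w))"
  and normal_orthogonal: "(U, \<phi>) \<in> A \<Longrightarrow> w \<in> U \<Longrightarrow>
    \<nu> (\<phi> w) \<bullet> Du (f \<circ> \<phi>) w = 0 \<and> \<nu> (\<phi> w) \<bullet> Dv (f \<circ> \<phi>) w = 0"
  and chart_mean_curv: "(U, \<phi>) \<in> A \<Longrightarrow> w \<in> U \<Longrightarrow>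
    mean_curv (f \<circ> \<phi>) (\<nu> (\<phi> w)) w = \<alpha> * (\<nu> (\<phi> w) \<bullet> f (\<phi> w)) / (norm (f (\<phi> w)))\<^sup>2"
  using stationary unfolding alpha_stationary_def oriented_immersed_surface_def by fast+

lemma chart_image_subset: "(U, \<phi>) \<in> A \<Longrightarrow> \<phi> ` U \<subseteq> topspace M"
  using chart_openin openin_subset by blast

lemma chart_cover:
  assumes "p \<in> topspace M"
  obtains U \<phi> w where "(U, \<phi>) \<in> A" "w \<in> U" "p = \<phi> w"
  using stationary assms unfolding alpha_stationary_def oriented_immersed_surface_def by fast

lemma f_nonzero: "p \<in> topspace M \<Longrightarrow> f p \<noteq> 0"
  using stationary unfolding alpha_stationary_def by blast

lemma normal_unit: "p \<in> topspace M \<Longrightarrow> \<nu> p \<bullet> \<nu> p = 1"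
  using stationary unfolding alpha_stationary_def oriented_immersed_surface_def
  by (metis norm_eq_1)

lemma chart_frame:
  assumes "(U, \<phi>) \<in> A" "w \<in> U"
  shows "metric_det (f \<circ> \<phi>) w > 0" "\<nu> (\<phi> w) \<bullet> \<nu> (\<phi> w) = 1"
    "\<nu> (\<phi> w) \<bullet> Du (f \<circ> \<phi>) w = 0" "\<nu> (\<phi> w) \<bullet> Dv (f \<circ> \<phi>) w = 0"
  using metric_det_pos[OF chart_smooth[OF assms(1)] assms(2) chart_inj[OF assms]]
    normal_unit chart_image_subset[OF assms(1)] normal_orthogonal[OF assms] assms(2)
  by auto

lemma openin_chart_image:
  assumes "(U, \<phi>) \<in> A" "open V" "V \<subseteq> U"
  shows "openin M (\<phi> ` V)"
proof -
  have "openin (top_of_set U) V" using assms(2,3) by (metis inf.absorb_iff2 openin_open)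
  then have "openin (subtopology M (\<phi> ` U)) (\<phi> ` V)"
    using homeomorphic_imp_open_map[OF chart_homeomorphic[OF assms(1)]] unfolding open_map_def by blast
  then show ?thesis using chart_openin[OF assms(1)] openin_trans_full by blast
qed

lemma continuous_map_f: "continuous_map M euclidean f"
  unfolding continuous_map_def
proof (intro conjI allI impI)
  fix T :: "(real^3) set" assume "openin euclidean T"
  then have T: "open T" by simp
  show "openin M {p \<in> topspace M. f p \<in> T}"
  proof (subst openin_subopen, intro ballI)
    fix p assume p: "p \<in> {p \<in> topspace M. f p \<in> T}"
    then obtain U \<phi> w where chart: "(U, \<phi>) \<in> A" "w \<in> U" "p = \<phi> w"
      using chart_cover by blast
    define V where "V = U \<inter> (f \<circ> \<phi>) -` T"
    have "continuous_on U (f \<circ> \<phi>)"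
      using C2_partials_on_continuous(1)[OF smooth_on_C2_partials[OF chart_smooth[OF chart(1)]]] .
    then have "open V" unfolding V_def using chart_open[OF chart(1)] T by (rule continuous_open_preimage)
    then have "openin M (\<phi> ` V)" by (rule openin_chart_image[OF chart(1)]) (simp add: V_def)
    moreover have "\<phi> ` V \<subseteq> {p \<in> topspace M. f p \<in> T}"
      using chart_image_subset[OF chart(1)] by (auto simp: V_def)
    ultimately show "\<exists>T'. openin M T' \<and> p \<in> T' \<and> T' \<subseteq> {p \<in> topspace M. f p \<in> T}"
      using p chart by (auto simp: V_def)
  qed
qed simp

lemma lb_sq_norm_at_critical:
  assumes chart: "(U, \<phi>) \<in> A" "w \<in> U"
    and crit: "sq_norm_u (f \<circ> \<phi>) w = 0" "sq_norm_v (f \<circ> \<phi>) w = 0"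
  shows "lb_a11 (f \<circ> \<phi>) w * sq_norm_uu (f \<circ> \<phi>) w + 2 * lb_a12 (f \<circ> \<phi>) w * sq_norm_uv (f \<circ> \<phi>) w
      + lb_a22 (f \<circ> \<phi>) w * sq_norm_vv (f \<circ> \<phi>) w
      + lb_b1 (f \<circ> \<phi>) w * sq_norm_u (f \<circ> \<phi>) w + lb_b2 (f \<circ> \<phi>) w * sq_norm_v (f \<circ> \<phi>) w
    = 2 * \<alpha> + 4"
proof -
  let ?X = "f \<circ> \<phi>" and ?c = "\<nu> (\<phi> w) \<bullet> f (\<phi> w)"
  have c2: "?c\<^sup>2 = sq_norm ?X w"
    using normal_sq_eq_sq_norm_at_critical[OF chart_frame[OF chart] crit] by simp
  have sq: "sq_norm ?X w > 0" "(norm (f (\<phi> w)))\<^sup>2 = sq_norm ?X w"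
    using f_nonzero chart_image_subset[OF chart(1)] chart(2)
    by (auto simp: sq_norm_def power2_norm_eq_inner)
  have "2 * ?c * (\<alpha> * ?c / (norm (f (\<phi> w)))\<^sup>2) = 2 * \<alpha> * (?c\<^sup>2 / sq_norm ?X w)"
    unfolding sq(2) by (simp add: power2_eq_square)
  also have "\<dots> = 2 * \<alpha>" using c2 sq(1) by simp
  finally have "2 * ?c * (\<alpha> * ?c / (norm (f (\<phi> w)))\<^sup>2) = 2 * \<alpha>" .
  then show ?thesis
    using lb_sq_norm_eq_mean_curv[OF chart_frame[OF chart]] chart_mean_curv[OF chart] by simp
qed

lemma alpha_bound_at_max:
  assumes p: "p \<in> topspace M" and max: "\<And>q. q \<in> topspace M \<Longrightarrow> f q \<bullet> f q \<le> f p \<bullet> f p"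
  shows "2 * \<alpha> + 4 \<le> 0"
proof -
  obtain U \<phi> w where chart: "(U, \<phi>) \<in> A" "w \<in> U" "p = \<phi> w" using chart_cover[OF p] .
  let ?X = "f \<circ> \<phi>"
  have U: "open U" and d: "C2_partials_on U (sq_norm ?X) (sq_norm_u ?X) (sq_norm_v ?X)
      (sq_norm_uu ?X) (sq_norm_uv ?X) (sq_norm_vu ?X) (sq_norm_vv ?X)"
    using chart_open C2_partials_on_sq_norm chart_smooth chart(1) by blast+
  have umax: "sq_norm ?X v \<le> sq_norm ?X w" if "v \<in> U" for v
    using max chart_image_subset[OF chart(1)] that chart(3) by (auto simp: sq_norm_def)
  have ell: "lb_a11 ?X w > 0" "(lb_a12 ?X w)\<^sup>2 < lb_a11 ?X w * lb_a22 ?X w"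
    using lb_elliptic[OF chart_frame(1)[OF chart(1,2)]] by auto
  show ?thesis
    using elliptic_op_nonpos_at_max[OF U d chart(2) umax ell, where ?b1.0="lb_b1 ?X w" and ?b2.0="lb_b2 ?X w"]
      lb_sq_norm_at_critical[OF chart(1,2) C2_partials_on_interior_max(1,2)[OF U d chart(2) umax]]
    by simp
qed

lemma alpha_bound_at_min:
  assumes p: "p \<in> topspace M" and min: "\<And>q. q \<in> topspace M \<Longrightarrow> f p \<bullet> f p \<le> f q \<bullet> f q"
  shows "2 * \<alpha> + 4 \<ge> 0"
proof -
  obtain U \<phi> w where chart: "(U, \<phi>) \<in> A" "w \<in> U" "p = \<phi> w" using chart_cover[OF p] .
  let ?X = "f \<circ> \<phi>"
  have U: "open U" and d: "C2_partials_on U (\<lambda>v. - sq_norm ?X v) (\<lambda>v. - sq_norm_u ?X v)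
      (\<lambda>v. - sq_norm_v ?X v) (\<lambda>v. - sq_norm_uu ?X v) (\<lambda>v. - sq_norm_uv ?X v)
      (\<lambda>v. - sq_norm_vu ?X v) (\<lambda>v. - sq_norm_vv ?X v)"
    using chart_open C2_partials_on_minus[OF C2_partials_on_sq_norm] chart_smooth chart(1) by blast+
  have umax: "- sq_norm ?X v \<le> - sq_norm ?X w" if "v \<in> U" for v
    using min chart_image_subset[OF chart(1)] that chart(3) by (auto simp: sq_norm_def)
  have ell: "lb_a11 ?X w > 0" "(lb_a12 ?X w)\<^sup>2 < lb_a11 ?X w * lb_a22 ?X w"
    using lb_elliptic[OF chart_frame(1)[OF chart(1,2)]] by auto
  have "sq_norm_u ?X w = 0" "sq_norm_v ?X w = 0"
    using C2_partials_on_interior_max(1,2)[OF U d chart(2) umax] by simp_all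
  then show ?thesis
    using elliptic_op_nonpos_at_max[OF U d chart(2) umax ell, where ?b1.0="lb_b1 ?X w" and ?b2.0="lb_b2 ?X w"]
      lb_sq_norm_at_critical[OF chart(1,2)]
    by simp
qed

lemma max_level_set_openin:
  assumes \<alpha>: "\<alpha> = -2" and max: "\<And>q. q \<in> topspace M \<Longrightarrow> f q \<bullet> f q \<le> m"
  shows "openin M {p \<in> topspace M. f p \<bullet> f p = m}"
proof (subst openin_subopen, intro ballI)
  fix p assume p: "p \<in> {p \<in> topspace M. f p \<bullet> f p = m}"
  then obtain U \<phi> w0 where chart: "(U, \<phi>) \<in> A" "w0 \<in> U" "p = \<phi> w0" using chart_cover by blast
  let ?X = "f \<circ> \<phi>"
  have U: "open U" using chart_open[OF chart(1)] .
  have in_M: "\<phi> w \<in> topspace M" if "w \<in> U" for w using chart_image_subset[OF chart(1)] that by blast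
  have umax: "sq_norm ?X w \<le> sq_norm ?X w0" if "w \<in> U" for w
    using max[OF in_M[OF that]] p chart(3) by (simp add: sq_norm_def)
  have nz: "?X w \<noteq> 0" if "w \<in> U" for w using f_nonzero[OF in_M[OF that]] by simp
  have L: "lb_a11 ?X w * sq_norm_uu ?X w + 2 * lb_a12 ?X w * sq_norm_uv ?X w + lb_a22 ?X w * sq_norm_vv ?X w
      + log_b1 ?X w * sq_norm_u ?X w + log_b2 ?X w * sq_norm_v ?X w \<ge> 0" if "w \<in> U" for w
  proof -
    have "mean_curv ?X (\<nu> (\<phi> w)) w = -2 * (\<nu> (\<phi> w) \<bullet> ?X w) / (norm (?X w))\<^sup>2"
      using chart_mean_curv[OF chart(1) that] \<alpha> by simp
    from log_op_sq_norm_eq_0[OF chart_frame[OF chart(1) that] nz[OF that] this] show ?thesis by simp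
  qed
  have ell: "lb_a11 ?X w > 0 \<and> (lb_a12 ?X w)\<^sup>2 < lb_a11 ?X w * lb_a22 ?X w" if "w \<in> U" for w
    using lb_elliptic[OF chart_frame(1)[OF chart(1) that]] .
  obtain r where r: "r > 0" "\<forall>w\<in>ball w0 r. sq_norm ?X w = sq_norm ?X w0"
    using elliptic_strong_max_local[OF U C2_partials_on_sq_norm[OF chart_smooth[OF chart(1)]]
        continuous_on_lb_coeffs[OF chart_smooth[OF chart(1)] chart_frame(1)[OF chart(1)] nz]
        ell L chart(2) umax]
    by blast
  define V where "V = ball w0 r \<inter> U"
  have "openin M (\<phi> ` V)" using openin_chart_image[OF chart(1)] U by (simp add: V_def open_Int)
  moreover have "\<phi> ` V \<subseteq> {p \<in> topspace M. f p \<bullet> f p = m}"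
    using r(2) p chart(3) in_M by (auto simp: V_def sq_norm_def)
  moreover have "p \<in> \<phi> ` V" using chart r(1) by (simp add: V_def)
  ultimately show "\<exists>T. openin M T \<and> p \<in> T \<and> T \<subseteq> {p \<in> topspace M. f p \<bullet> f p = m}"
    by blast
qed

lemma image_openin_sphere:
  assumes R: "R > 0" and sph: "\<And>p. p \<in> topspace M \<Longrightarrow> norm (f p) = R"
  shows "openin (top_of_set (sphere 0 R)) (f ` topspace M)"
  unfolding openin_euclidean_subtopology_iff
proof (intro conjI ballI)
  show "f ` topspace M \<subseteq> sphere 0 R" using sph by auto
  fix q assume "q \<in> f ` topspace M"
  then obtain U \<phi> w0 where chart: "(U, \<phi>) \<in> A" "w0 \<in> U" "q = f (\<phi> w0)"
    using chart_cover by blast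
  have "norm ((f \<circ> \<phi>) w) = R" if "w \<in> U" for w
    using sph chart_image_subset[OF chart(1)] that by auto
  then obtain \<epsilon> where "\<epsilon> > 0" "\<And>y. y \<in> sphere 0 R \<Longrightarrow> dist y ((f \<circ> \<phi>) w0) < \<epsilon> \<Longrightarrow> y \<in> (f \<circ> \<phi>) ` U"
    using sphere_locally_in_image[OF chart_open[OF chart(1)] chart_smooth[OF chart(1)] chart(2)
        chart_frame(1)[OF chart(1,2)] _ R] by blast
  then show "\<exists>e>0. \<forall>y\<in>sphere 0 R. dist y q < e \<longrightarrow> y \<in> f ` topspace M"
    using chart chart_image_subset[OF chart(1)] by (metis comp_apply image_comp image_mono subsetD)
qed

end

locale closed_alpha_stationary_surface = alpha_stationary_surface +
  assumes compact: "compact_space M" and connected: "connected_space M"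
    and nonempty: "topspace M \<noteq> {}"
begin

lemma compact_image: "compact (f ` topspace M)"
  using image_compactin[OF compact[unfolded compact_space_def] continuous_map_f] by simp

lemma sq_norm_attains_max:
  obtains p where "p \<in> topspace M" "\<And>q. q \<in> topspace M \<Longrightarrow> f q \<bullet> f q \<le> f p \<bullet> f p"
proof -
  have "f ` topspace M \<noteq> {}" "continuous_on (f ` topspace M) (\<lambda>y. y \<bullet> y)"
    using nonempty by (auto intro: continuous_intros)
  from continuous_attains_sup[OF compact_image this] show thesis using that by auto
qed

lemma sq_norm_attains_min:
  obtains p where "p \<in> topspace M" "\<And>q. q \<in> topspace M \<Longrightarrow> f p \<bullet> f p \<le> f q \<bullet> f q"
proof -
  have "f ` topspace M \<noteq> {}" "continuous_on (f ` topspace M) (\<lambda>y. y \<bullet> y)"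
    using nonempty by (auto intro: continuous_intros)
  from continuous_attains_inf[OF compact_image this] show thesis using that by auto
qed

lemma alpha_eq_minus_2: "\<alpha> = -2"
proof -
  obtain p where "p \<in> topspace M" "\<And>q. q \<in> topspace M \<Longrightarrow> f q \<bullet> f q \<le> f p \<bullet> f p"
    using sq_norm_attains_max by metis
  from alpha_bound_at_max[OF this] have "2 * \<alpha> + 4 \<le> 0" .
  moreover obtain p' where "p' \<in> topspace M" "\<And>q. q \<in> topspace M \<Longrightarrow> f p' \<bullet> f p' \<le> f q \<bullet> f q"
    using sq_norm_attains_min by metis
  from alpha_bound_at_min[OF this] have "2 * \<alpha> + 4 \<ge> 0" .
  ultimately show ?thesis by linarith
qed

lemma norm_constant:
  obtains R where "R > 0" "\<And>p. p \<in> topspace M \<Longrightarrow> norm (f p) = R"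
proof -
  obtain p0 where p0: "p0 \<in> topspace M" "\<And>q. q \<in> topspace M \<Longrightarrow> f q \<bullet> f q \<le> f p0 \<bullet> f p0"
    using sq_norm_attains_max by metis
  define S where "S = {p \<in> topspace M. f p \<bullet> f p = f p0 \<bullet> f p0}"
  have "closed {y::real^3. y \<bullet> y = f p0 \<bullet> f p0}"
    by (rule closed_Collect_eq) (intro continuous_intros)+
  then have "closedin M S"
    unfolding S_def using closedin_continuous_map_preimage[OF continuous_map_f] by fastforce
  moreover have "openin M S"
    unfolding S_def by (rule max_level_set_openin[OF alpha_eq_minus_2 p0(2)])
  moreover have "p0 \<in> S" using p0(1) by (simp add: S_def)
  ultimately have "S = topspace M"
    using connected unfolding connected_space_clopen_in by blast
  then have "norm (f p) = norm (f p0)" if "p \<in> topspace M" for p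
    using that by (auto simp: S_def dot_square_norm)
  moreover have "norm (f p0) > 0" using f_nonzero[OF p0(1)] by simp
  ultimately show thesis using that by blast
qed

lemma image_eq_sphere: "\<exists>R>0. f ` topspace M = sphere 0 R"
proof -
  obtain R where R: "R > 0" "\<And>p. p \<in> topspace M \<Longrightarrow> norm (f p) = R"
    using norm_constant by metis
  have "openin (top_of_set (sphere 0 R)) (f ` topspace M)" by (rule image_openin_sphere[OF R])
  moreover have "closedin (top_of_set (sphere 0 R)) (f ` topspace M)"
    using R(2) compact_imp_closed[OF compact_image] by (intro closed_subset) auto
  moreover have "connected (sphere (0::real^3) R)" by (simp add: connected_sphere)
  ultimately have "f ` topspace M = sphere 0 R"
    using nonempty unfolding connected_clopen by blast
  then show ?thesis using R(1) by blast
qed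

end

theorem mainTheorem5:
  fixes \<alpha> :: real and M :: "'m topology"
    and A :: "((real \<times> real) set \<times> (real \<times> real \<Rightarrow> 'm)) set"
    and f \<nu> :: "'m \<Rightarrow> real^3"
  assumes "alpha_stationary \<alpha> M A f \<nu>"
    and "compact_space M" and "connected_space M" and "topspace M \<noteq> {}"
  shows "(\<exists>r>0. f ` topspace M = sphere 0 r) \<and> \<alpha> = -2"
proof -
  interpret closed_alpha_stationary_surface \<alpha> M A f \<nu>
    using assms by unfold_locales
  show ?thesis using image_eq_sphere alpha_eq_minus_2 by blast
qed

end
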